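(* Let $V,W$ satisfy (H2),(H3) of the context and let $\beta_N>0$ with $\beta_N/N\to\infty$. Then $(Z_NQ_N)_N$ is exponentially tight: for every $L\geq0$ there is a compact $K_L\subset\mathcal{M}_1(\mathbb{R}^d)$ with $$\limsup_{N\to\infty}\frac{\log Z_NQ_N(\mathcal{M}_1(\mathbb{R}^d)\setminus K_L)}{\beta_N}\leq-L.$$
   Context: $V:\mathbb{R}^d\to\mathbb{R}$, $W:\mathbb{R}^d\times\mathbb{R}^d\to(-\infty,+\infty]$ symmetric and finite off the diagonal. (H2) $V$ continuous, $V(x)\to\infty$ as $|x|\to\infty$, $\int e^{-V}<\infty$; (H3) $W(x,y)\geq c-\varepsilon_o(V(x)+V(y))$ for some $c\in\mathbb{R}$, $\varepsilon_o\in(0,1)$. $H_N(x_1,\dots,x_N)=\frac1N\sum_iV(x_i)+\frac1{N^2}\sum_{i<j}W(x_i,x_j)$, $Z_N=\int_{(\mathbb{R}^d)^N}e^{-\beta_NH_N}dx$ (finite for $N$ large), $P_N$ the probability with density $e^{-\beta_NH_N}/Z_N$, and $Q_N$ the law under $P_N$ of $\mu_N=\frac1N\sum_i\delta_{x_i}\in\mathcal{M}_1(\mathbb{R}^d)$ (probability measures, weak topology). *)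

theory Defs
  imports "HOL-Probability.Probability"
begin

definition prob_measures :: "('a::euclidean_space) measure set" where
  "prob_measures = {M. prob_space M \<and> sets M = sets borel}"

definition weak_top :: "('a::euclidean_space) measure topology" where
  "weak_top = topology_generated_by
     {{M \<in> prob_measures. (\<integral>x. f x \<partial>M) \<in> U} | (f :: 'a \<Rightarrow> real) U.
        continuous_on UNIV f \<and> bounded (range f) \<and> open U}"

text \<open>Empirical measure (1/N) sum_{i<N} delta_{x_i}.\<close>
definition emp_measure :: "nat \<Rightarrow> (nat \<Rightarrow> 'a::euclidean_space) \<Rightarrow> 'a measure" where
  "emp_measure N x = distr (uniform_count_measure {..<N}) borel x"

definition config_space :: "nat \<Rightarrow> (nat \<Rightarrow> 'a::euclidean_space) measure" where
  "config_space N = PiM {..<N} (\<lambda>_. lborel)"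

definition H_N :: "('a \<Rightarrow> real) \<Rightarrow> ('a \<Rightarrow> 'a \<Rightarrow> ereal) \<Rightarrow> nat \<Rightarrow> (nat \<Rightarrow> 'a) \<Rightarrow> ereal" where
  "H_N V W N x = ereal ((1 / real N) * (\<Sum>i<N. V (x i)))
     + ereal (1 / (real N)^2) * (\<Sum>(i,j)\<in>{(i,j). i < j \<and> j < N}. W (x i) (x j))"

definition gibbs_weight :: "real \<Rightarrow> ereal \<Rightarrow> ennreal" where
  "gibbs_weight b h = (if h = \<infinity> then 0 else ennreal (exp (- b * real_of_ereal h)))"

definition ZQ :: "('a::euclidean_space \<Rightarrow> real) \<Rightarrow> ('a \<Rightarrow> 'a \<Rightarrow> ereal) \<Rightarrow> (nat \<Rightarrow> real)
    \<Rightarrow> nat \<Rightarrow> 'a measure set \<Rightarrow> ennreal" where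
  "ZQ V W beta N A = (\<integral>\<^sup>+ x. indicator {x. emp_measure N x \<in> A} x
        * gibbs_weight (beta N) (H_N V W N x) \<partial>config_space N)"

definition ln_ennreal :: "ennreal \<Rightarrow> ereal" where
  "ln_ennreal z = (if z = 0 then -\<infinity> else if z = \<top> then \<infinity> else ereal (ln (enn2real z)))"

end

theory Submission
  imports Defs
begin

text \<open>First, for each \<open>M\<close> the empirical measures of all configurations with
  \<open>(1/N) \<Sum>\<^sub>i V(x\<^sub>i) \<le> M\<close> lie in a single weakly compact set. In the absence of Prokhorov's theorem
  this set is built as a continuous image: a continuous curve \<open>\<gamma>\<close> maps a closed set
  \<open>T \<subseteq> [0,\<infinity>)\<close> (a stack of Cantor sets) onto \<open>\<real>\<^sup>d\<close> with parameter at most \<open>|x| + 2\<close>, so every empirical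
  measure is the push-forward of Lebesgue measure on \<open>[0,1)\<close> under \<open>\<gamma> \<circ> q\<close> for a monotone \<open>q\<close>
  with values in \<open>T\<close>. By Markov's inequality, \<open>q\<close> is dominated by a fixed function \<open>\<tau>\<close>; such \<open>q\<close>
  form a compact set of the product topology (Tychonoff), on which \<open>q \<mapsto> (\<gamma> \<circ> q)\<^sub>*Leb\<close> is weakly
  continuous (Helly's argument: monotone functions close on a fine grid are close off a small set).

  Second, off that compact set the mean of \<open>V\<close> exceeds \<open>M\<close>, while (H3) gives
  \<open>H\<^sub>N \<ge> (1 - \<epsilon>\<^sub>o)(1/N) \<Sum>\<^sub>i V(x\<^sub>i) - |c|/2\<close>. Hence \<open>Z\<^sub>N Q\<^sub>N\<close> of the complement is at most
  \<open>exp(\<beta>\<^sub>N |c|/2 - (\<beta>\<^sub>N (1 - \<epsilon>\<^sub>o)/N - 1) N M) (\<integral> e\<^sup>-\<^sup>V)\<^sup>N\<close>, and as \<open>\<beta>\<^sub>N / N \<rightarrow> \<infinity>\<close> its logarithm divided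
  by \<open>\<beta>\<^sub>N\<close> is eventually below \<open>|c|/2 - (1 - \<epsilon>\<^sub>o) M + 1\<close>, which is \<open>-L\<close> for \<open>M\<close> large.\<close>

section \<open>Digit expansions and a curve onto \<open>\<real>\<^sup>d\<close>\<close>

definition digit_expansion :: "real \<Rightarrow> (nat \<Rightarrow> bool) \<Rightarrow> real" where
  "digit_expansion r w = (\<Sum>k. of_bool (w k) / r ^ Suc k)"

lemma sums_inverse_powers_from:
  fixes r :: real
  assumes "1 < r"
  shows "(\<lambda>k. 1 / r ^ Suc (k + n)) sums (1 / ((r - 1) * r ^ n))"
proof -
  have "(\<lambda>k. (1 / r) ^ k) sums (1 / (1 - 1 / r))"
    using assms by (intro geometric_sums) simp
  then have "(\<lambda>k. 1 / r ^ Suc n * (1 / r) ^ k) sums (1 / r ^ Suc n * (1 / (1 - 1 / r)))"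
    by (rule sums_mult)
  moreover have "1 / r ^ Suc n * (1 / (1 - 1 / r)) = 1 / ((r - 1) * r ^ n)"
    using assms by (simp add: field_simps)
  ultimately show ?thesis
    by (simp add: power_add power_one_over field_simps)
qed

lemma summable_abs_le_inverse_powers:
  fixes r :: real and f :: "nat \<Rightarrow> real"
  assumes "1 < r" and "\<And>k. \<bar>f k\<bar> \<le> 1 / r ^ Suc (k + n)"
  shows "summable f" and "\<bar>suminf f\<bar> \<le> 1 / ((r - 1) * r ^ n)"
proof -
  note geom = sums_inverse_powers_from[OF assms(1), of n]
  have abs: "summable (\<lambda>k. \<bar>f k\<bar>)"
    by (rule summable_comparison_test[OF _ sums_summable[OF geom]]) (use assms(2) in auto)
  then show "summable f" by (rule summable_rabs_cancel)
  have "\<bar>suminf f\<bar> \<le> (\<Sum>k. \<bar>f k\<bar>)" by (rule summable_rabs[OF abs])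
  also have "\<dots> \<le> (\<Sum>k. 1 / r ^ Suc (k + n))"
    by (rule suminf_le[OF assms(2) abs sums_summable[OF geom]])
  finally show "\<bar>suminf f\<bar> \<le> 1 / ((r - 1) * r ^ n)" using sums_unique[OF geom] by simp
qed

lemma summable_digits:
  fixes r :: real
  assumes "1 < r"
  shows "summable (\<lambda>k. of_bool (w k) / r ^ Suc k)"
  by (rule summable_abs_le_inverse_powers(1)[OF assms, of _ 0]) (use assms in simp)

lemma abs_digit_difference_le:
  fixes r :: real
  assumes "1 < r"
  shows "\<bar>(of_bool a - of_bool b) / r ^ k\<bar> \<le> 1 / r ^ k"
proof -
  have "0 < r ^ k" using assms by simp
  then show ?thesis by (cases a; cases b) simp_all
qed

lemma digit_expansion_diff:
  fixes r :: real
  assumes "1 < r"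
  shows "digit_expansion r w - digit_expansion r w'
           = (\<Sum>k. (of_bool (w k) - of_bool (w' k)) / r ^ Suc k)"
  unfolding digit_expansion_def diff_divide_distrib
  by (rule suminf_diff) (use summable_digits[OF assms] in auto)

lemma digit_expansion_split:
  fixes r :: real
  assumes "1 < r" and "\<forall>j<n. w j = w' j"
  shows "digit_expansion r w - digit_expansion r w'
           = (\<Sum>k. (of_bool (w (k + n)) - of_bool (w' (k + n))) / r ^ Suc (k + n))"
proof -
  define d where "d k = (of_bool (w k) - of_bool (w' k)) / r ^ Suc k" for k
  have "summable d"
    unfolding d_def diff_divide_distrib using summable_digits[OF assms(1)] by (intro summable_diff)
  moreover have "sum d {..<n} = 0" using assms(2) by (simp add: d_def)
  ultimately have "suminf d = (\<Sum>k. d (k + n))"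
    using suminf_split_initial_segment[of d n] by simp
  with digit_expansion_diff[OF assms(1)] show ?thesis unfolding d_def[abs_def] by simp
qed

lemma digit_expansion_close:
  fixes r :: real
  assumes "1 < r" and "\<forall>j<n. w j = w' j"
  shows "\<bar>digit_expansion r w - digit_expansion r w'\<bar> \<le> 1 / ((r - 1) * r ^ n)"
  unfolding digit_expansion_split[OF assms]
  using assms(1) by (intro summable_abs_le_inverse_powers(2) abs_digit_difference_le)

lemma digit_expansion_bounds:
  fixes r :: real
  assumes "1 < r"
  shows "0 \<le> digit_expansion r w" and "digit_expansion r w \<le> 1 / (r - 1)"
proof -
  show "0 \<le> digit_expansion r w"
    unfolding digit_expansion_def using assms by (intro suminf_nonneg summable_digits) auto
  have "digit_expansion r (\<lambda>_. False) = 0" by (simp add: digit_expansion_def)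
  with digit_expansion_close[OF assms, of 0 w "\<lambda>_. False"]
  show "digit_expansion r w \<le> 1 / (r - 1)" by simp
qed

lemma digit_expansion_gap:
  fixes r :: real
  assumes "1 < r" and "w i \<noteq> w' i" and "\<forall>j<i. w j = w' j"
  shows "1 / r ^ Suc i - 1 / ((r - 1) * r ^ Suc i)
           \<le> \<bar>digit_expansion r w - digit_expansion r w'\<bar>"
proof -
  define d where "d k = (of_bool (w k) - of_bool (w' k)) / r ^ Suc k" for k
  have sd: "summable d"
    unfolding d_def diff_divide_distrib using summable_digits[OF assms(1)] by (intro summable_diff)
  have "sum d {..<Suc i} = d i" using assms(3) by (simp add: d_def)
  then have "suminf d = (\<Sum>k. d (k + Suc i)) + d i"
    using suminf_split_initial_segment[OF sd, of "Suc i"] by simp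
  then have split: "digit_expansion r w - digit_expansion r w' = (\<Sum>k. d (k + Suc i)) + d i"
    using digit_expansion_diff[OF assms(1)] unfolding d_def[abs_def] by simp
  have "0 < r ^ Suc i" using assms(1) by simp
  then have "\<bar>d i\<bar> = 1 / r ^ Suc i" using assms(2) by (cases "w i"; cases "w' i") (simp_all add: d_def)
  moreover have "\<bar>\<Sum>k. d (k + Suc i)\<bar> \<le> 1 / ((r - 1) * r ^ Suc i)"
    unfolding d_def using assms(1)
    by (intro summable_abs_le_inverse_powers(2) abs_digit_difference_le)
  ultimately show ?thesis unfolding split by linarith
qed

lemma ternary_expansion_bounds: "0 \<le> digit_expansion 3 w" "digit_expansion 3 w \<le> 1 / 2"
  using digit_expansion_bounds[of 3 w] by simp_all

lemma ternary_expansion_agree: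
  assumes "\<bar>digit_expansion 3 w - digit_expansion 3 w'\<bar> < 1 / (2 * 3 ^ n)"
  shows "\<forall>i<n. w i = w' i"
proof (rule ccontr)
  assume "\<not> ?thesis"
  then obtain i where i: "i < n \<and> w i \<noteq> w' i" and "\<forall>j<i. \<not> (j < n \<and> w j \<noteq> w' j)"
    using exists_least_iff[of "\<lambda>i. i < n \<and> w i \<noteq> w' i"] by blast
  then have before: "\<forall>j<i. w j = w' j" by auto
  have "1 / (2 * 3 ^ n) \<le> (1 / (2 * 3 ^ Suc i) :: real)"
    using i by (intro divide_left_mono mult_left_mono power_increasing) auto
  also have "\<dots> = 1 / 3 ^ Suc i - 1 / ((3 - 1) * 3 ^ Suc i)" by simp
  also have "\<dots> \<le> \<bar>digit_expansion 3 w - digit_expansion 3 w'\<bar>"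
    using i before by (intro digit_expansion_gap) auto
  finally show False using assms by simp
qed

lemma inj_ternary_expansion: "inj (digit_expansion 3)"
proof (rule injI, rule ext)
  fix w w' i assume "digit_expansion 3 w = digit_expansion 3 w'"
  then have "\<forall>j<Suc i. w j = w' j" by (intro ternary_expansion_agree) simp
  then show "w i = w' i" by simp
qed

lemma binary_expansion_surj:
  assumes "0 \<le> y" and "y < (1::real)"
  shows "\<exists>w. digit_expansion 2 w = y"
proof -
  define F where "F n = \<lfloor>y * 2 ^ n\<rfloor>" for n
  define w where "w k = odd (F (Suc k))" for k
  have step: "(of_int (F (Suc n)) :: real) = 2 * of_int (F n) + of_bool (w n)" for n
  proof -
    have "2 * F n \<le> F (Suc n)" "F (Suc n) \<le> 2 * F n + 1"
      unfolding F_def by (simp_all add: le_floor_iff floor_le_iff algebra_simps; linarith)+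
    then consider "F (Suc n) = 2 * F n" | "F (Suc n) = 2 * F n + 1" by linarith
    then show ?thesis unfolding w_def by cases simp_all
  qed
  have "F 0 = 0" using assms by (simp add: F_def floor_eq_iff)
  then have partial: "(\<Sum>k<n. of_bool (w k) / 2 ^ Suc k) = (of_int (F n) / 2 ^ n :: real)" for n
    by (induction n) (simp_all add: step field_simps)
  have "(\<lambda>n. of_int (F n) / 2 ^ n) \<longlonglongrightarrow> y"
  proof (rule tendsto_sandwich[of "\<lambda>n. y - 1 / 2 ^ n" _ _ "\<lambda>_. y"])
    show "\<forall>\<^sub>F n in sequentially. y - 1 / 2 ^ n \<le> of_int (F n) / 2 ^ n"
    proof (intro always_eventually allI)
      fix n
      have "y * 2 ^ n - 1 \<le> of_int (F n)" unfolding F_def by linarith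
      then have "(y * 2 ^ n - 1) / 2 ^ n \<le> of_int (F n) / 2 ^ n" by (intro divide_right_mono) auto
      then show "y - 1 / 2 ^ n \<le> of_int (F n) / 2 ^ n" by (simp add: diff_divide_distrib)
    qed
    show "\<forall>\<^sub>F n in sequentially. of_int (F n) / 2 ^ n \<le> y"
      by (intro always_eventually allI) (simp add: F_def field_simps)
    have "(\<lambda>n. y - (1 / 2) ^ n) \<longlonglongrightarrow> y - 0"
      by (intro tendsto_diff tendsto_const LIMSEQ_realpow_zero) auto
    then show "(\<lambda>n. y - 1 / 2 ^ n) \<longlonglongrightarrow> y" by (simp add: power_one_over)
  qed simp
  then have "(\<lambda>k. of_bool (w k) / 2 ^ Suc k) sums y" unfolding sums_def partial .
  then show ?thesis unfolding digit_expansion_def by (auto dest: sums_unique)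
qed

lemma openin_product_topology_cylinder:
  assumes "finite F" and "F \<subseteq> I" and "\<And>i. i \<in> F \<Longrightarrow> openin (X i) (U i)"
  shows "openin (product_topology X I) {x \<in> topspace (product_topology X I). \<forall>i\<in>F. x i \<in> U i}"
  using assms
proof (induction F rule: finite_induct)
  case empty
  show ?case using openin_topspace[of "product_topology X I"] by simp
next
  case (insert a F)
  have "openin (product_topology X I) {x \<in> topspace (product_topology X I). x a \<in> U a}"
    using insert.prems
    by (intro openin_continuous_map_preimage[OF continuous_map_product_projection]) auto
  moreover have "{x \<in> topspace (product_topology X I). \<forall>i\<in>insert a F. x i \<in> U i}
      = {x \<in> topspace (product_topology X I). \<forall>i\<in>F. x i \<in> U i}
        \<inter> {x \<in> topspace (product_topology X I). x a \<in> U a}"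
    by auto
  ultimately show ?case using insert by auto
qed

lemma continuous_map_to_euclidean_metric:
  "continuous_map X euclidean f \<longleftrightarrow>
     (\<forall>x\<in>topspace X. \<forall>\<epsilon>>0. \<exists>U. openin X U \<and> x \<in> U \<and> (\<forall>y\<in>U. dist (f y) (f x) < \<epsilon>))"
  using Met_TC.continuous_map_to_metric[of X f] by (simp add: dist_commute)

lemma continuous_map_ternary_expansion:
  "continuous_map (product_topology (\<lambda>_. discrete_topology UNIV) UNIV) euclideanreal
     (digit_expansion 3)"
  unfolding continuous_map_to_euclidean_metric
proof (intro ballI allI impI)
  fix w :: "nat \<Rightarrow> bool" and e :: real
  assume "0 < e"
  then obtain n where n: "1 / e < 3 ^ n" using real_arch_pow[of 3 "1 / e"] by auto
  define U where "U = {v \<in> topspace (product_topology (\<lambda>_. discrete_topology UNIV) UNIV).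
                        \<forall>i\<in>{..<n}. v i \<in> {w i}}"
  have "openin (product_topology (\<lambda>_. discrete_topology UNIV) UNIV) U"
    unfolding U_def by (intro openin_product_topology_cylinder) auto
  moreover have "w \<in> U" by (simp add: U_def)
  moreover have "dist (digit_expansion 3 v) (digit_expansion 3 w) < e" if "v \<in> U" for v
  proof -
    have "\<bar>digit_expansion 3 w - digit_expansion 3 v\<bar> \<le> 1 / ((3 - 1) * 3 ^ n)"
      using that by (intro digit_expansion_close) (auto simp: U_def)
    also have "\<dots> < e" using n \<open>0 < e\<close> by (simp add: field_simps)
    finally show ?thesis by (simp add: dist_real_def)
  qed
  ultimately show "\<exists>U. openin (product_topology (\<lambda>_. discrete_topology UNIV) UNIV) U \<and> w \<in> U \<and>
      (\<forall>v\<in>U. dist (digit_expansion 3 v) (digit_expansion 3 w) < e)"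
    by blast
qed

text \<open>A Cantor set, as continuous image of the compact Cantor space.\<close>
lemma compact_range_ternary_expansion: "compact (range (digit_expansion 3))"
proof -
  have "compact_space (product_topology (\<lambda>_::nat. discrete_topology (UNIV :: bool set)) UNIV)"
    by (simp add: compact_space_product_topology compact_space_discrete_topology)
  then have "compactin euclideanreal
      (digit_expansion 3 ` topspace (product_topology (\<lambda>_. discrete_topology UNIV) UNIV))"
    by (intro image_compactin[OF _ continuous_map_ternary_expansion]) (simp add: compact_space_def)
  then show ?thesis by simp
qed

definition basis_enum :: "nat \<Rightarrow> 'a::euclidean_space" where
  "basis_enum = (SOME h. bij_betw h {..<DIM('a)} Basis)"

lemma bij_betw_basis_enum: "bij_betw (basis_enum :: nat \<Rightarrow> 'a) {..<DIM('a::euclidean_space)} Basis"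
proof -
  have "\<exists>h. bij_betw h {..<DIM('a)} (Basis :: 'a set)"
    using ex_bij_betw_nat_finite[OF finite_Basis] by (simp add: atLeast0LessThan)
  then show ?thesis unfolding basis_enum_def by (rule someI_ex)
qed

lemma basis_enum_in_Basis: "j < DIM('a::euclidean_space) \<Longrightarrow> (basis_enum j :: 'a) \<in> Basis"
  using bij_betw_basis_enum[where 'a='a] by (auto simp: bij_betw_def)

text \<open>The digits of \<open>w\<close> are dealt out in turn to the \<open>DIM('a)\<close> coordinates, each of which
  reads its share as a binary expansion.\<close>
definition cube_point :: "(nat \<Rightarrow> bool) \<Rightarrow> 'a::euclidean_space" where
  "cube_point w = (\<Sum>j<DIM('a). digit_expansion 2 (\<lambda>k. w (k * DIM('a) + j)) *\<^sub>R basis_enum j)"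

lemma cube_point_close:
  assumes "\<forall>i<n * DIM('a). w i = w' i"
  shows "norm (cube_point w - cube_point w' :: 'a::euclidean_space) \<le> DIM('a) / 2 ^ n"
proof -
  let ?d = "DIM('a)"
  have "norm (cube_point w - cube_point w' :: 'a)
      = norm (\<Sum>j<?d. (digit_expansion 2 (\<lambda>k. w (k * ?d + j))
                        - digit_expansion 2 (\<lambda>k. w' (k * ?d + j))) *\<^sub>R (basis_enum j :: 'a))"
    unfolding cube_point_def by (simp add: sum_subtractf scaleR_diff_left)
  also have "\<dots> \<le> (\<Sum>j<?d. 1 / 2 ^ n)"
  proof (intro order_trans[OF norm_sum] sum_mono)
    fix j assume j: "j \<in> {..<?d}"
    have "k * ?d + j < n * ?d" if "k < n" for k
    proof -
      have "k * ?d + j < Suc k * ?d" using j by simp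
      also have "\<dots> \<le> n * ?d" using that by (intro mult_le_mono1) simp
      finally show ?thesis .
    qed
    then have "\<bar>digit_expansion 2 (\<lambda>k. w (k * ?d + j)) - digit_expansion 2 (\<lambda>k. w' (k * ?d + j))\<bar>
        \<le> 1 / ((2 - 1) * 2 ^ n)"
      using assms by (intro digit_expansion_close) auto
    then show "norm ((digit_expansion 2 (\<lambda>k. w (k * ?d + j)) - digit_expansion 2 (\<lambda>k. w' (k * ?d + j)))
        *\<^sub>R (basis_enum j :: 'a)) \<le> 1 / 2 ^ n"
      using basis_enum_in_Basis[where 'a='a, of j] j by simp
  qed
  finally show ?thesis by simp
qed

lemma cube_point_surj:
  assumes "\<forall>b\<in>Basis. 0 \<le> y \<bullet> b \<and> y \<bullet> b < 1"
  shows "\<exists>w. cube_point w = (y :: 'a::euclidean_space)"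
proof -
  let ?d = "DIM('a)"
  have "\<exists>v. digit_expansion 2 v = y \<bullet> basis_enum j" if "j < ?d" for j
    using assms basis_enum_in_Basis[OF that] by (intro binary_expansion_surj) auto
  then have "\<forall>j. \<exists>v. j < ?d \<longrightarrow> digit_expansion 2 v = y \<bullet> basis_enum j" by blast
  then obtain v where v: "\<And>j. j < ?d \<Longrightarrow> digit_expansion 2 (v j) = y \<bullet> basis_enum j"
    by (metis choice)
  define w where "w i = v (i mod ?d) (i div ?d)" for i
  have "cube_point w = (\<Sum>j<?d. (y \<bullet> basis_enum j) *\<^sub>R (basis_enum j :: 'a))"
    unfolding cube_point_def by (intro sum.cong refl) (simp add: w_def v)
  also have "\<dots> = (\<Sum>b\<in>Basis. (y \<bullet> b) *\<^sub>R b)"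
    by (rule sum.reindex_bij_betw[OF bij_betw_basis_enum])
  finally show ?thesis by (auto simp: euclidean_representation)
qed

definition shifted_cantor_set :: "real set" where
  "shifted_cantor_set = {real n + digit_expansion 3 w | n w. True}"

text \<open>As the ternary part lies in \<open>[0, 1/2]\<close>, \<open>n\<close> and \<open>w\<close> are recovered from \<open>t = n + digit_expansion 3 w\<close>;
  then \<open>t\<close> is sent to \<open>cube_point w \<in> [0,1)\<^sup>d\<close> rescaled to the cube \<open>[-(n+1), n+1]\<^sup>d\<close>.\<close>
definition cantor_curve :: "real \<Rightarrow> 'a::euclidean_space" where
  "cantor_curve t = (real (nat \<lfloor>t\<rfloor>) + 1)
     *\<^sub>R (2 *\<^sub>R cube_point (inv (digit_expansion 3) (t - of_int \<lfloor>t\<rfloor>)) - One)"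

lemma floor_shifted_ternary_expansion: "\<lfloor>real n + digit_expansion 3 w\<rfloor> = int n"
  using ternary_expansion_bounds[of w] by (simp add: floor_eq_iff)

lemma cantor_curve_eq:
  "cantor_curve (real n + digit_expansion 3 w) = (real n + 1) *\<^sub>R (2 *\<^sub>R cube_point w - One)"
  by (simp add: cantor_curve_def floor_shifted_ternary_expansion inv_f_f[OF inj_ternary_expansion])

lemma compact_shifted_cantor_set_Icc: "compact (shifted_cantor_set \<inter> {0..s})"
proof -
  have "shifted_cantor_set \<inter> {0..s}
      = (\<Union>n\<le>nat \<lceil>s\<rceil>. (+) (real n) ` range (digit_expansion 3)) \<inter> {0..s}"
  proof (intro equalityI subsetI)
    fix t assume "t \<in> shifted_cantor_set \<inter> {0..s}"
    then obtain n w where t: "t = real n + digit_expansion 3 w" "0 \<le> t" "t \<le> s"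
      unfolding shifted_cantor_set_def by auto
    then have "real n \<le> of_int \<lceil>s\<rceil>"
      using ternary_expansion_bounds(1)[of w] le_of_int_ceiling[of s] by linarith
    then have "n \<le> nat \<lceil>s\<rceil>" by linarith
    then show "t \<in> (\<Union>n\<le>nat \<lceil>s\<rceil>. (+) (real n) ` range (digit_expansion 3)) \<inter> {0..s}"
      using t by auto
  qed (auto simp: shifted_cantor_set_def)
  then show ?thesis
    by (auto intro!: compact_Int_closed compact_UN compact_translation compact_range_ternary_expansion)
qed

lemma continuous_on_cantor_curve:
  "continuous_on shifted_cantor_set (cantor_curve :: real \<Rightarrow> 'a::euclidean_space)"
  unfolding continuous_on_iff
proof (intro ballI allI impI)
  fix t0 e :: real assume "t0 \<in> shifted_cantor_set" and "0 < e"
  then obtain n w0 where t0: "t0 = real n + digit_expansion 3 w0"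
    unfolding shifted_cantor_set_def by blast
  let ?d = "DIM('a::euclidean_space)"
  obtain k where k: "2 * (real n + 1) * ?d / e < 2 ^ k" using real_arch_pow[of 2] by auto
  define \<delta> where "\<delta> = min (1 / 4) (1 / (2 * 3 ^ (k * ?d)) :: real)"
  have "\<delta> > 0" by (simp add: \<delta>_def)
  moreover have "dist (cantor_curve t :: 'a) (cantor_curve t0) < e"
    if "t \<in> shifted_cantor_set" and "dist t t0 < \<delta>" for t
  proof -
    obtain m w where t: "t = real m + digit_expansion 3 w"
      using \<open>t \<in> shifted_cantor_set\<close> unfolding shifted_cantor_set_def by blast
    have "\<bar>real m - real n\<bar> < 1"
      using \<open>dist t t0 < \<delta>\<close> ternary_expansion_bounds[of w] ternary_expansion_bounds[of w0]
      unfolding t t0 dist_real_def \<delta>_def by linarith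
    then have "m = n" by linarith
    then have "\<bar>digit_expansion 3 w - digit_expansion 3 w0\<bar> < 1 / (2 * 3 ^ (k * ?d))"
      using \<open>dist t t0 < \<delta>\<close> unfolding t t0 dist_real_def \<delta>_def by simp
    then have "norm (cube_point w - cube_point w0 :: 'a) \<le> ?d / 2 ^ k"
      by (intro cube_point_close ternary_expansion_agree)
    moreover have "cantor_curve t - cantor_curve t0
        = (2 * (real n + 1)) *\<^sub>R (cube_point w - cube_point w0 :: 'a)"
      unfolding t t0 \<open>m = n\<close> cantor_curve_eq by (simp add: algebra_simps)
    ultimately have "dist (cantor_curve t :: 'a) (cantor_curve t0) \<le> 2 * (real n + 1) * (?d / 2 ^ k)"
      unfolding dist_norm by (simp add: mult_left_mono del: times_divide_eq_right)
    also have "\<dots> < e" using k \<open>0 < e\<close> by (simp add: field_simps)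
    finally show ?thesis .
  qed
  ultimately show "\<exists>\<delta>>0. \<forall>t\<in>shifted_cantor_set. dist t t0 < \<delta> \<longrightarrow>
      dist (cantor_curve t :: 'a) (cantor_curve t0) < e"
    by blast
qed

lemma cantor_curve_surj:
  "\<exists>t\<in>shifted_cantor_set. 0 \<le> t \<and> t \<le> norm x + 2 \<and> cantor_curve t = (x :: 'a::euclidean_space)"
proof -
  define n where "n = nat \<lceil>norm x\<rceil>"
  have "real n = of_int \<lceil>norm x\<rceil>" by (simp add: n_def)
  then have n: "norm x \<le> real n" "real n \<le> norm x + 1"
    using of_int_ceiling_le_add_one[of "norm x"] by linarith+
  define y where "y = (1 / 2) *\<^sub>R ((1 / (real n + 1)) *\<^sub>R x + One)"
  have "0 \<le> y \<bullet> b \<and> y \<bullet> b < 1" if b: "b \<in> Basis" for b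
  proof -
    define z where "z = (x \<bullet> b) / (real n + 1)"
    have "\<bar>x \<bullet> b\<bar> < real n + 1" using Basis_le_norm[OF b, of x] n by linarith
    then have "-1 < z" "z < 1" by (auto simp: z_def abs_less_iff divide_less_eq less_divide_eq)
    moreover have "y \<bullet> b = (z + 1) / 2" using b by (simp add: y_def z_def inner_add_left)
    ultimately show ?thesis by simp
  qed
  then obtain w where w: "cube_point w = y" using cube_point_surj by blast
  have "cantor_curve (real n + digit_expansion 3 w) = x"
    unfolding cantor_curve_eq w y_def by (simp add: algebra_simps)
  moreover have "real n + digit_expansion 3 w \<in> shifted_cantor_set"
    unfolding shifted_cantor_set_def by blast
  ultimately show ?thesis
    using n ternary_expansion_bounds[of w] by (intro bexI[of _ "real n + digit_expansion 3 w"]) auto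
qed

text \<open>This reduces the quantile representation of measures on \<open>\<real>\<^sup>d\<close> to that on the real line.\<close>
lemma euclidean_space_curve_parametrisation:
  "\<exists>T (\<gamma> :: real \<Rightarrow> 'a::euclidean_space). (\<forall>s. compact (T \<inter> {0..s})) \<and> continuous_on T \<gamma> \<and>
     (\<forall>x. \<exists>t\<in>T. 0 \<le> t \<and> t \<le> norm x + 2 \<and> \<gamma> t = x)"
  using compact_shifted_cantor_set_Icc continuous_on_cantor_curve cantor_curve_surj by blast

section \<open>Quantile representation and weak compactness\<close>

abbreviation lborel01 :: "real measure" where
  "lborel01 \<equiv> restrict_space lborel {0..<1}"

lemma prob_space_lborel01: "prob_space lborel01"
  by standard (simp add: space_restrict_space emeasure_restrict_space)

lemma (in prob_space) abs_integral_diff_le_off_set: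
  fixes f h :: "'a \<Rightarrow> real"
  assumes "f \<in> borel_measurable M" "h \<in> borel_measurable M"
    and "\<And>x. \<bar>f x\<bar> \<le> B" "\<And>x. \<bar>h x\<bar> \<le> B"
    and "A \<in> sets M" and "\<And>x. x \<in> space M - A \<Longrightarrow> \<bar>f x - h x\<bar> \<le> e" and "0 \<le> e"
  shows "\<bar>(\<integral>x. f x \<partial>M) - (\<integral>x. h x \<partial>M)\<bar> \<le> e + 2 * B * measure M A"
proof -
  have int: "integrable M f" "integrable M h"
    using assms(1-4) by (auto intro!: integrable_const_bound[where B=B])
  have int_bound: "integrable M (\<lambda>x. e + 2 * B * indicator A x)"
    using assms(5)
    by (auto intro!: integrable_real_indicator simp: emeasure_finite less_top[symmetric])
  have "\<bar>f x - h x\<bar> \<le> e + 2 * B * indicator A x" if "x \<in> space M" for x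
  proof (cases "x \<in> A")
    case True
    then show ?thesis using assms(3,4)[of x] \<open>0 \<le> e\<close> by (simp add: abs_le_iff)
  next
    case False
    then show ?thesis using assms(6) that by simp
  qed
  then have "\<bar>(\<integral>x. f x - h x \<partial>M)\<bar> \<le> (\<integral>x. e + 2 * B * indicator A x \<partial>M)"
    by (intro order_trans[OF integral_abs_bound] integral_mono) (use int int_bound in auto)
  also have "\<dots> = (\<integral>x. e \<partial>M) + (\<integral>x. 2 * B * indicator A x \<partial>M)"
    using assms(5)
    by (intro Bochner_Integration.integral_add)
       (auto intro!: integrable_real_indicator simp: emeasure_finite less_top[symmetric])
  also have "\<dots> = e + 2 * B * measure M A"
    using assms(5) by (simp add: prob_space emeasure_finite)
  finally show ?thesis using int by simp
qed

lemma card_large_increments_le: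
  fixes f :: "nat \<Rightarrow> real"
  assumes "\<And>j. j < m \<Longrightarrow> f j \<le> f (Suc j)"
  shows "real (card {j. j < m \<and> \<delta> \<le> f (Suc j) - f j}) * \<delta> \<le> f m - f 0"
proof -
  let ?J = "{j. j < m \<and> \<delta> \<le> f (Suc j) - f j}"
  have "real (card ?J) * \<delta> = (\<Sum>j\<in>?J. \<delta>)" by simp
  also have "\<dots> \<le> (\<Sum>j\<in>?J. f (Suc j) - f j)" by (intro sum_mono) simp
  also have "\<dots> \<le> (\<Sum>j<m. f (Suc j) - f j)" by (intro sum_mono2) (auto simp: assms)
  also have "\<dots> = f m - f 0" by (rule sum_lessThan_telescope)
  finally show ?thesis .
qed

lemma mono_on_close_between:
  fixes q q0 :: "real \<Rightarrow> real"
  assumes "mono_on I q" "mono_on I q0" and "a \<in> I" "b \<in> I" "u \<in> I" "a \<le> u" "u \<le> b"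
    and "\<bar>q a - q0 a\<bar> < \<delta>" "\<bar>q b - q0 b\<bar> < \<delta>" "q0 b - q0 a < \<delta>"
  shows "\<bar>q u - q0 u\<bar> < 2 * \<delta>"
proof -
  have "q a \<le> q u" "q u \<le> q b" "q0 a \<le> q0 u" "q0 u \<le> q0 b"
    using assms(1-7) by (auto intro: mono_onD)
  then show ?thesis using assms(8-10) by (simp add: abs_less_iff)
qed

lemma measure_lborel01_eq: "A \<subseteq> {0..<1} \<Longrightarrow> measure lborel01 A = measure lborel A"
  by (rule measure_restrict_space) auto

lemma sets_lborel01_iff: "A \<in> sets lborel01 \<longleftrightarrow> A \<subseteq> {0..<1} \<and> A \<in> sets borel"
  by (subst sets_restrict_space_iff) auto

lemma uniform_grid_cell:
  fixes u c :: real
  assumes "0 < m" and "0 < c" and "u \<in> {0..<c}"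
  obtains j where "j < m" "real j * c / real m \<le> u" "u \<le> real (Suc j) * c / real m"
proof
  define z where "z = u * real m / c"
  have "0 \<le> z" "z < real m" using assms by (auto simp: z_def divide_less_eq)
  then have "real (nat \<lfloor>z\<rfloor>) = of_int \<lfloor>z\<rfloor>" by simp
  then have j: "real (nat \<lfloor>z\<rfloor>) \<le> z" "z < real (nat \<lfloor>z\<rfloor>) + 1"
    using of_int_floor_le[of z] real_of_int_floor_add_one_gt[of z] by linarith+
  with \<open>z < real m\<close> have "real (nat \<lfloor>z\<rfloor>) < real m" by linarith
  then show "nat \<lfloor>z\<rfloor> < m" by simp
  show "real (nat \<lfloor>z\<rfloor>) * c / real m \<le> u" "u \<le> real (Suc (nat \<lfloor>z\<rfloor>)) * c / real m"
    using j assms by (auto simp: z_def field_simps)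
qed

text \<open>A monotone \<open>q\<close> that is \<open>\<delta>\<close>-close to the monotone \<open>q0\<close> on a finite grid is \<open>2\<delta>\<close>-close
  to it away from the grid cells on which \<open>q0\<close> increases by at least \<open>\<delta>\<close>; as the total
  increase of \<open>q0\<close> is finite, there are few such cells.\<close>
lemma mono_on_approx_off_small_set:
  fixes q0 :: "real \<Rightarrow> real"
  assumes q0: "mono_on {0..<1} q0" and "0 < \<delta>" "0 < \<kappa>" "0 < c" "c < 1"
  shows "\<exists>F A. finite F \<and> F \<subseteq> {0..<1} \<and> A \<in> sets lborel01 \<and> measure lborel01 A \<le> \<kappa> \<and>
     (\<forall>q. mono_on {0..<1} q \<longrightarrow> (\<forall>u\<in>F. \<bar>q u - q0 u\<bar> < \<delta>) \<longrightarrow>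
        (\<forall>u\<in>{0..<c} - A. \<bar>q u - q0 u\<bar> < 2 * \<delta>))"
proof -
  have "q0 0 \<le> q0 c" using assms by (intro mono_onD[OF q0]) auto
  obtain m :: nat where m: "(q0 c - q0 0) * c / (\<delta> * \<kappa>) < real m"
    using reals_Archimedean2 by blast
  moreover have "0 \<le> (q0 c - q0 0) * c / (\<delta> * \<kappa>)"
    using \<open>q0 0 \<le> q0 c\<close> assms by simp
  ultimately have "0 < m" by linarith
  define uu where "uu j = real j * c / real m" for j
  have uu_mono: "uu i \<le> uu j" if "i \<le> j" for i j
    using that assms by (simp add: uu_def divide_right_mono mult_right_mono)
  have uu_m: "uu m = c" and uu_0: "uu 0 = 0" using \<open>0 < m\<close> by (simp_all add: uu_def)
  have uu_in: "uu j \<in> {0..<1}" if "j \<le> m" for j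
    using uu_mono[OF that] uu_mono[of 0 j] assms unfolding uu_m uu_0 by auto
  define J where "J = {j. j < m \<and> \<delta> \<le> q0 (uu (Suc j)) - q0 (uu j)}"
  define A where "A = (\<Union>j\<in>J. {uu j..uu (Suc j)})"
  have "q0 (uu j) \<le> q0 (uu (Suc j))" if "j < m" for j
    using uu_in uu_mono that by (intro mono_onD[OF q0]) auto
  from card_large_increments_le[of m "\<lambda>j. q0 (uu j)" \<delta>, OF this]
  have J_bound: "real (card J) * \<delta> \<le> q0 c - q0 0"
    unfolding J_def uu_m uu_0 .
  have "{uu j..uu (Suc j)} \<subseteq> {0..<1}" if "j \<in> J" for j
    using uu_in[of j] uu_in[of "Suc j"] that by (auto simp: J_def)
  then have A_sub: "A \<subseteq> {0..<1}" unfolding A_def by blast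
  have "measure lborel A \<le> (\<Sum>j\<in>J. measure lborel {uu j..uu (Suc j)})"
    unfolding A_def by (rule measure_UNION_le) (auto simp: J_def)
  also have "\<dots> = (\<Sum>j\<in>J. c / real m)"
  proof (rule sum.cong[OF refl])
    fix j
    have "uu (Suc j) - uu j = c / real m" by (simp add: uu_def add_divide_distrib algebra_simps)
    then show "measure lborel {uu j..uu (Suc j)} = c / real m"
      using measure_lborel_Icc[OF uu_mono[of j "Suc j"]] by simp
  qed
  also have "\<dots> = real (card J) * (c / real m)" by simp
  also have "\<dots> \<le> \<kappa>"
  proof -
    have "real (card J) * (c / real m) \<le> (q0 c - q0 0) / \<delta> * (c / real m)"
      using J_bound assms \<open>0 < m\<close> by (intro mult_right_mono) (simp_all add: field_simps)
    also have "\<dots> \<le> \<kappa>" using m assms \<open>0 < m\<close> by (simp add: field_simps)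
    finally show ?thesis .
  qed
  finally have "measure lborel01 A \<le> \<kappa>" using A_sub by (simp add: measure_lborel01_eq)
  moreover have "A \<in> sets lborel01" using A_sub by (auto simp: sets_lborel01_iff A_def J_def)
  moreover have "\<bar>q u - q0 u\<bar> < 2 * \<delta>"
    if q: "mono_on {0..<1} q" and close: "\<forall>u\<in>uu ` {..m}. \<bar>q u - q0 u\<bar> < \<delta>"
      and u: "u \<in> {0..<c} - A" for q u
  proof -
    obtain j where "j < m" "uu j \<le> u" "u \<le> uu (Suc j)"
      using uniform_grid_cell[OF \<open>0 < m\<close> \<open>0 < c\<close>, of u] u unfolding uu_def by auto
    moreover from this have "j \<notin> J" using u by (auto simp: A_def)
    ultimately show ?thesis
      using close uu_in u assms
      by (intro mono_on_close_between[OF q q0, of "uu j" "uu (Suc j)"]) (auto simp: J_def)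
  qed
  ultimately show ?thesis
    using uu_in by (intro exI[of _ "uu ` {..m}"] exI[of _ A]) auto
qed

text \<open>\<open>PiE\<close> makes these functions extensional (\<open>undefined\<close> off \<open>[0,1)\<close>), as the points of the
  product topology on \<open>[0,1)\<close> must be.\<close>
definition quantile_functions :: "real set \<Rightarrow> (real \<Rightarrow> real) \<Rightarrow> (real \<Rightarrow> real) set" where
  "quantile_functions T \<tau> = {q \<in> PiE {0..<1} (\<lambda>u. T \<inter> {0..\<tau> u}). mono_on {0..<1} q}"

definition quantile_measure :: "(real \<Rightarrow> 'a::euclidean_space) \<Rightarrow> (real \<Rightarrow> real) \<Rightarrow> 'a measure" where
  "quantile_measure \<gamma> q = distr lborel01 borel (\<lambda>u. \<gamma> (q u))"

lemma quantile_functionsD: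
  assumes "q \<in> quantile_functions T \<tau>"
  shows "mono_on {0..<1} q" and "\<And>u. u \<in> {0..<1} \<Longrightarrow> q u \<in> T \<and> 0 \<le> q u \<and> q u \<le> \<tau> u"
  using assms unfolding quantile_functions_def by (auto simp: PiE_iff)

lemma integral_quantile_continuity:
  fixes g :: "real \<Rightarrow> real"
  assumes uc: "\<And>s. uniformly_continuous_on (T \<inter> {0..s}) g" and g_bound: "\<And>t. \<bar>g t\<bar> \<le> B"
    and \<tau>: "mono_on {0..<1} \<tau>" and q0: "q0 \<in> quantile_functions T \<tau>"
    and meas: "\<And>q. q \<in> quantile_functions T \<tau> \<Longrightarrow> (\<lambda>u. g (q u)) \<in> borel_measurable lborel01"
    and "0 < \<epsilon>"
  shows "\<exists>F \<delta>. finite F \<and> F \<subseteq> {0..<1} \<and> 0 < \<delta> \<and> (\<forall>q\<in>quantile_functions T \<tau>.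
           (\<forall>u\<in>F. \<bar>q u - q0 u\<bar> < \<delta>) \<longrightarrow>
           \<bar>(\<integral>u. g (q u) \<partial>lborel01) - (\<integral>u. g (q0 u) \<partial>lborel01)\<bar> < \<epsilon>)"
proof -
  interpret prob_space lborel01 by (rule prob_space_lborel01)
  have "0 \<le> B" using g_bound[of 0] by linarith
  define \<eta> where "\<eta> = min (1 / 2) (\<epsilon> / (8 * (B + 1)))"
  have \<eta>: "0 < \<eta>" "\<eta> < 1" "2 * B * (2 * \<eta>) \<le> \<epsilon> / 2"
    using \<open>0 < \<epsilon>\<close> \<open>0 \<le> B\<close> by (auto simp: \<eta>_def min_def field_simps)
  \<comment> \<open>\<open>\<tau>\<close> may blow up at \<open>1\<close>; before \<open>1 - \<eta>\<close> all values lie in the compact \<open>T \<inter> {0..s}\<close>.\<close>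
  define s where "s = \<tau> (1 - \<eta>)"
  obtain \<delta> where "0 < \<delta>"
    and \<delta>: "\<And>t t'. t \<in> T \<inter> {0..s} \<Longrightarrow> t' \<in> T \<inter> {0..s} \<Longrightarrow> dist t' t < \<delta> \<Longrightarrow>
                   dist (g t') (g t) < \<epsilon> / 4"
    using uc[of s] \<open>0 < \<epsilon>\<close> unfolding uniformly_continuous_on_def
    by (metis zero_less_divide_iff zero_less_numeral)
  obtain F A where F: "finite F" "F \<subseteq> {0..<1}" and A: "A \<in> sets lborel01" "measure lborel01 A \<le> \<eta>"
    and approx: "\<And>q. mono_on {0..<1} q \<Longrightarrow> \<forall>u\<in>F. \<bar>q u - q0 u\<bar> < \<delta> / 2 \<Longrightarrow>
                   \<forall>u\<in>{0..<1 - \<eta>} - A. \<bar>q u - q0 u\<bar> < 2 * (\<delta> / 2)"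
    using mono_on_approx_off_small_set[OF quantile_functionsD(1)[OF q0], of "\<delta> / 2" \<eta> "1 - \<eta>"]
      \<open>0 < \<delta>\<close> \<eta> by auto
  define Bad where "Bad = A \<union> {1 - \<eta>..<1}"
  have Bad: "Bad \<in> sets lborel01" "measure lborel01 Bad \<le> 2 * \<eta>"
  proof -
    have I: "{1 - \<eta>..<1} \<in> sets lborel01" using \<eta> by (auto simp: sets_lborel01_iff)
    then show "Bad \<in> sets lborel01" using A by (simp add: Bad_def)
    have "measure lborel01 Bad \<le> measure lborel01 A + measure lborel01 {1 - \<eta>..<1}"
      unfolding Bad_def using A(1) I by (rule measure_Un_le)
    also have "measure lborel01 {1 - \<eta>..<1} = \<eta>" using \<eta> by (simp add: measure_lborel01_eq)
    finally show "measure lborel01 Bad \<le> 2 * \<eta>" using A(2) by simp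
  qed
  have "\<bar>(\<integral>u. g (q u) \<partial>lborel01) - (\<integral>u. g (q0 u) \<partial>lborel01)\<bar> < \<epsilon>"
    if q: "q \<in> quantile_functions T \<tau>" and close: "\<forall>u\<in>F. \<bar>q u - q0 u\<bar> < \<delta> / 2" for q
  proof -
    have "\<bar>g (q u) - g (q0 u)\<bar> \<le> \<epsilon> / 4" if u: "u \<in> space lborel01 - Bad" for u
    proof -
      have u': "u \<in> {0..<1 - \<eta>} - A" "u \<in> {0..<1}" using u by (auto simp: Bad_def space_restrict_space)
      have "\<tau> u \<le> s" unfolding s_def using \<eta> u' by (intro mono_onD[OF \<tau>]) auto
      then have "q u \<in> T \<inter> {0..s}" "q0 u \<in> T \<inter> {0..s}"
        using quantile_functionsD(2)[OF q u'(2)] quantile_functionsD(2)[OF q0 u'(2)] by auto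
      moreover have "dist (q u) (q0 u) < \<delta>"
        using approx[OF quantile_functionsD(1)[OF q] close] u' by (simp add: dist_real_def)
      ultimately show ?thesis using \<delta> by (force simp: dist_real_def)
    qed
    then have "\<bar>(\<integral>u. g (q u) \<partial>lborel01) - (\<integral>u. g (q0 u) \<partial>lborel01)\<bar>
        \<le> \<epsilon> / 4 + 2 * B * measure lborel01 Bad"
      using \<open>0 < \<epsilon>\<close> by (intro abs_integral_diff_le_off_set meas q q0 g_bound Bad(1)) auto
    also have "\<dots> \<le> \<epsilon> / 4 + \<epsilon> / 2"
      using Bad(2) \<eta>(3) \<open>0 \<le> B\<close> mult_left_mono[OF Bad(2), of "2 * B"] by linarith
    finally show ?thesis using \<open>0 < \<epsilon>\<close> by linarith
  qed
  then show ?thesis using F \<open>0 < \<delta>\<close> by (intro exI[of _ F] exI[of _ "\<delta> / 2"]) auto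
qed

lemma closedin_mono_on:
  fixes I :: "'a::order set"
  defines "X \<equiv> product_topology (\<lambda>_. euclideanreal) I"
  shows "closedin X {q \<in> topspace X. mono_on I q}"
proof -
  define C where "C = (\<lambda>(u, v). {q \<in> topspace X. q u - q v \<in> {..0::real}})"
  have "closedin X (C (u, v))" if "u \<in> I" "v \<in> I" for u v
  proof -
    have "continuous_map X euclideanreal (\<lambda>q. q u - q v)"
      unfolding X_def using that by (intro continuous_map_diff continuous_map_product_projection)
    from closedin_continuous_map_preimage[OF this, of "{..0}"]
    show ?thesis by (simp add: C_def closed_closedin[symmetric])
  qed
  then have "closedin X (\<Inter>(insert (topspace X) (C ` {(u, v). u \<in> I \<and> v \<in> I \<and> u \<le> v})))"
    by (intro closedin_Inter) auto
  moreover have "\<Inter>(insert (topspace X) (C ` {(u, v). u \<in> I \<and> v \<in> I \<and> u \<le> v}))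
      = {q \<in> topspace X. mono_on I q}"
    by (auto simp: C_def mono_on_def)
  ultimately show ?thesis by simp
qed

lemma compactin_quantile_functions:
  assumes "\<And>s. compact (T \<inter> {0..s})"
  shows "compactin (product_topology (\<lambda>_. euclideanreal) {0..<1}) (quantile_functions T \<tau>)"
proof (rule closed_compactin)
  let ?X = "product_topology (\<lambda>_. euclideanreal) {0..<1::real}"
  let ?E = "PiE {0..<1} (\<lambda>u. T \<inter> {0..\<tau> u})"
  show "compactin ?X ?E" using assms by (simp add: compactin_PiE)
  show "quantile_functions T \<tau> \<subseteq> ?E" unfolding quantile_functions_def by auto
  have "closedin ?X ?E"
    using assms by (simp add: closedin_product_topology closed_closedin[symmetric] compact_imp_closed)
  then have "closedin ?X (?E \<inter> {q \<in> topspace ?X. mono_on {0..<1} q})"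
    by (intro closedin_Int closedin_mono_on)
  moreover have "?E \<inter> {q \<in> topspace ?X. mono_on {0..<1} q} = quantile_functions T \<tau>"
    unfolding quantile_functions_def by (auto simp: PiE_iff extensional_def)
  ultimately show "closedin ?X (quantile_functions T \<tau>)" by simp
qed

lemma measurable_quantile_curve:
  assumes "continuous_on T \<gamma>" and "q \<in> quantile_functions T \<tau>"
  shows "(\<lambda>u. \<gamma> (q u)) \<in> borel_measurable lborel01"
proof -
  have "q \<in> borel_measurable (restrict_space borel {0..<1})"
    by (rule borel_measurable_mono_on_fnc[OF quantile_functionsD(1)[OF assms(2)]])
  then have "q \<in> borel_measurable lborel01"
    by (simp add: measurable_cong_sets[OF sets_restrict_space_cong[OF sets_lborel]])
  then have "q \<in> measurable lborel01 (restrict_space borel T)"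
    using quantile_functionsD(2)[OF assms(2)]
    by (intro measurable_restrict_space2) (auto simp: space_restrict_space)
  from measurable_comp[OF this borel_measurable_continuous_on_restrict[OF assms(1)]]
  show ?thesis by (simp add: comp_def)
qed

lemma quantile_measure_in_prob_measures:
  assumes "continuous_on T \<gamma>" and "q \<in> quantile_functions T \<tau>"
  shows "quantile_measure \<gamma> q \<in> prob_measures"
  using prob_space.prob_space_distr[OF prob_space_lborel01 measurable_quantile_curve[OF assms]]
  by (simp add: prob_measures_def quantile_measure_def)

lemma integral_quantile_measure:
  fixes \<gamma> :: "real \<Rightarrow> 'a::euclidean_space" and f :: "'a \<Rightarrow> real"
  assumes "continuous_on T \<gamma>" and "q \<in> quantile_functions T \<tau>" and "continuous_on UNIV f"
  shows "(\<integral>x. f x \<partial>quantile_measure \<gamma> q) = (\<integral>u. f (\<gamma> (q u)) \<partial>lborel01)"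
  unfolding quantile_measure_def
  by (rule integral_distr[OF measurable_quantile_curve[OF assms(1,2)]
        borel_measurable_continuous_onI[OF assms(3)]])

lemma continuous_map_weak_top:
  fixes \<Phi> :: "'b \<Rightarrow> 'a::euclidean_space measure"
  assumes "\<Phi> ` topspace X \<subseteq> prob_measures"
    and "\<And>f :: 'a::euclidean_space \<Rightarrow> real. continuous_on UNIV f \<Longrightarrow> bounded (range f) \<Longrightarrow>
           continuous_map X euclideanreal (\<lambda>x. \<integral>y. f y \<partial>\<Phi> x)"
  shows "continuous_map X weak_top \<Phi>"
  unfolding weak_top_def
proof (rule continuous_on_generated_topo)
  fix U :: "'a measure set"
  assume "U \<in> {{M \<in> prob_measures. (\<integral>x. f x \<partial>M) \<in> V} | (f :: 'a \<Rightarrow> real) V.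
      continuous_on UNIV f \<and> bounded (range f) \<and> open V}"
  then obtain f :: "'a \<Rightarrow> real" and V :: "real set" where U: "U = {M \<in> prob_measures. (\<integral>x. f x \<partial>M) \<in> V}"
    and f: "continuous_on UNIV f" "bounded (range f)" and "open V" by blast
  have "\<Phi> -` U \<inter> topspace X = {x \<in> topspace X. (\<integral>y. f y \<partial>\<Phi> x) \<in> V}"
    using assms(1) unfolding U by (auto simp: image_subset_iff)
  moreover have "openin X {x \<in> topspace X. (\<integral>y. f y \<partial>\<Phi> x) \<in> V}"
    using \<open>open V\<close> by (intro openin_continuous_map_preimage[OF assms(2)[OF f]]) (simp only: open_openin)
  ultimately show "openin X (\<Phi> -` U \<inter> topspace X)" by (simp only:)
next
  let ?All = "{M \<in> prob_measures. (\<integral>x. (\<lambda>_. 0 :: real) x \<partial>M) \<in> UNIV}"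
  have "?All \<in> {{M \<in> prob_measures. (\<integral>x. f x \<partial>M) \<in> V} | (f :: 'a \<Rightarrow> real) V.
      continuous_on UNIV f \<and> bounded (range f) \<and> open V}"
    by (intro CollectI exI[of _ "\<lambda>_. 0 :: real"] exI[of _ UNIV]) auto
  moreover have "\<Phi> ` topspace X \<subseteq> ?All" using assms(1) by simp
  ultimately show "\<Phi> ` topspace X \<subseteq> \<Union> {{M \<in> prob_measures. (\<integral>x. f x \<partial>M) \<in> V} | (f :: 'a \<Rightarrow> real) V.
      continuous_on UNIV f \<and> bounded (range f) \<and> open V}"
    by (intro subset_trans[OF _ Union_upper])
qed

lemma continuous_map_quantile_measure:
  assumes T: "\<And>s. compact (T \<inter> {0..s})" and \<gamma>: "continuous_on T \<gamma>" and \<tau>: "mono_on {0..<1} \<tau>"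
  shows "continuous_map (subtopology (product_topology (\<lambda>_. euclideanreal) {0..<1}) (quantile_functions T \<tau>))
           weak_top (quantile_measure \<gamma>)"
proof (rule continuous_map_weak_top)
  let ?X = "product_topology (\<lambda>_. euclideanreal) {0..<1::real}"
  have top: "topspace (subtopology ?X (quantile_functions T \<tau>)) = quantile_functions T \<tau>"
    using compactin_subset_topspace[OF compactin_quantile_functions[OF T]] by auto
  then show "quantile_measure \<gamma> ` topspace (subtopology ?X (quantile_functions T \<tau>)) \<subseteq> prob_measures"
    using quantile_measure_in_prob_measures[OF \<gamma>] by auto
  fix f :: "'a \<Rightarrow> real" assume f: "continuous_on UNIV f" "bounded (range f)"
  then obtain B where B: "\<And>x. \<bar>f x\<bar> \<le> B" by (auto simp: bounded_iff)
  have uc: "uniformly_continuous_on (T \<inter> {0..s}) (\<lambda>t. f (\<gamma> t))" for s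
    using T f(1) \<gamma> by (intro compact_uniformly_continuous continuous_on_compose2[OF f(1)]
        continuous_on_subset[OF \<gamma>]) auto
  have meas: "(\<lambda>u. f (\<gamma> (q u))) \<in> borel_measurable lborel01" if "q \<in> quantile_functions T \<tau>" for q
    using measurable_comp[OF measurable_quantile_curve[OF \<gamma> that] borel_measurable_continuous_onI[OF f(1)]]
    by (simp add: comp_def)
  show "continuous_map (subtopology ?X (quantile_functions T \<tau>)) euclideanreal
      (\<lambda>q. \<integral>x. f x \<partial>quantile_measure \<gamma> q)"
    unfolding continuous_map_to_euclidean_metric top
  proof (intro ballI allI impI)
    fix q0 and \<epsilon> :: real assume q0: "q0 \<in> quantile_functions T \<tau>" and "0 < \<epsilon>"
    obtain F \<delta> where F: "finite F" "F \<subseteq> {0..<1}" and "0 < \<delta>"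
      and close: "\<And>q. q \<in> quantile_functions T \<tau> \<Longrightarrow> \<forall>u\<in>F. \<bar>q u - q0 u\<bar> < \<delta> \<Longrightarrow>
          \<bar>(\<integral>u. f (\<gamma> (q u)) \<partial>lborel01) - (\<integral>u. f (\<gamma> (q0 u)) \<partial>lborel01)\<bar> < \<epsilon>"
      using integral_quantile_continuity[OF uc B \<tau> q0 meas \<open>0 < \<epsilon>\<close>] by blast
    define U where "U = quantile_functions T \<tau> \<inter>
        {q \<in> topspace ?X. \<forall>u\<in>F. q u \<in> ball (q0 u) \<delta>}"
    have "openin (subtopology ?X (quantile_functions T \<tau>)) U"
      unfolding U_def by (intro openin_subtopology_Int2 openin_product_topology_cylinder F) auto
    moreover have "q0 \<in> U"
      using \<open>0 < \<delta>\<close> q0 top by (auto simp: U_def)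
    moreover have "dist (\<integral>x. f x \<partial>quantile_measure \<gamma> q) (\<integral>x. f x \<partial>quantile_measure \<gamma> q0) < \<epsilon>"
      if "q \<in> U" for q
    proof -
      have q: "q \<in> quantile_functions T \<tau>" using that by (simp add: U_def)
      have "\<forall>u\<in>F. \<bar>q u - q0 u\<bar> < \<delta>"
        using that by (auto simp: U_def dist_real_def abs_minus_commute)
      from close[OF q this] show ?thesis
        by (simp add: integral_quantile_measure[OF \<gamma> q f(1)]
            integral_quantile_measure[OF \<gamma> q0 f(1)] dist_real_def)
    qed
    ultimately show "\<exists>U. openin (subtopology ?X (quantile_functions T \<tau>)) U \<and> q0 \<in> U \<and>
        (\<forall>q\<in>U. dist (\<integral>x. f x \<partial>quantile_measure \<gamma> q) (\<integral>x. f x \<partial>quantile_measure \<gamma> q0) < \<epsilon>)"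
      by blast
  qed
qed

lemma compactin_weak_top_quantile_measures:
  assumes "\<And>s. compact (T \<inter> {0..s})" and "continuous_on T \<gamma>" and "mono_on {0..<1} \<tau>"
  shows "compactin weak_top (quantile_measure \<gamma> ` quantile_functions T \<tau>)"
  using compactin_quantile_functions[OF assms(1)]
  by (intro image_compactin[OF _ continuous_map_quantile_measure[OF assms]])
     (simp add: compactin_subtopology)

section \<open>Empirical measures as quantile measures\<close>

lemma floor_index_eq_iff:
  fixes u :: real
  assumes "0 < N" and "0 \<le> u"
  shows "nat \<lfloor>u * real N\<rfloor> = k \<longleftrightarrow> u \<in> {real k / real N..<real (Suc k) / real N}"
proof -
  have "nat \<lfloor>u * real N\<rfloor> = k \<longleftrightarrow> \<lfloor>u * real N\<rfloor> = int k"
    using assms by auto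
  also have "\<dots> \<longleftrightarrow> real k \<le> u * real N \<and> u * real N < real k + 1"
    by (simp add: floor_eq_iff)
  also have "\<dots> \<longleftrightarrow> u \<in> {real k / real N..<real (Suc k) / real N}"
    using assms by (simp add: field_simps)
  finally show ?thesis .
qed

lemma floor_index_less:
  fixes u :: real
  assumes "0 < N" and "u \<in> {0..<1}"
  shows "nat \<lfloor>u * real N\<rfloor> < N"
  using assms by (simp add: nat_less_iff floor_less_iff)

lemma preimage_floor_index:
  assumes "0 < N" and "k < N"
  shows "(\<lambda>u. nat \<lfloor>u * real N\<rfloor>) -` {k} \<inter> {0..<1} = {real k / real N..<real (Suc k) / real N}"
proof (intro set_eqI iffI)
  fix u assume "u \<in> (\<lambda>u. nat \<lfloor>u * real N\<rfloor>) -` {k} \<inter> {0..<1}"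
  then show "u \<in> {real k / real N..<real (Suc k) / real N}"
    using floor_index_eq_iff[OF assms(1)] by auto
next
  fix u assume u: "u \<in> {real k / real N..<real (Suc k) / real N}"
  have "real k / real N \<le> u" "u < real (Suc k) / real N" using u by simp_all
  moreover have "real (Suc k) / real N \<le> 1" using assms by (simp add: field_simps)
  moreover have "0 \<le> real k / real N" by simp
  ultimately have "0 \<le> u" "u < 1" by linarith+
  with u show "u \<in> (\<lambda>u. nat \<lfloor>u * real N\<rfloor>) -` {k} \<inter> {0..<1}"
    using floor_index_eq_iff[OF assms(1), of u k] by auto
qed

lemma measurable_floor_index:
  assumes "0 < N"
  shows "(\<lambda>u. nat \<lfloor>u * real N\<rfloor>) \<in> measurable lborel01 (uniform_count_measure {..<N})"
  unfolding measurable_cong_sets[OF refl sets_uniform_count_measure_count_space]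
    measurable_count_space_eq2[OF finite_lessThan]
  using assms floor_index_less preimage_floor_index
  by (auto simp: space_restrict_space sets_lborel01_iff)

lemma distr_lborel01_floor_index:
  assumes "0 < N"
  shows "distr lborel01 (uniform_count_measure {..<N}) (\<lambda>u. nat \<lfloor>u * real N\<rfloor>)
           = uniform_count_measure {..<N}"
proof (rule measure_eqI_finite)
  show "sets (distr lborel01 (uniform_count_measure {..<N}) (\<lambda>u. nat \<lfloor>u * real N\<rfloor>)) = Pow {..<N}"
    by (simp add: sets_uniform_count_measure)
  fix k assume "k \<in> {..<N}"
  then have "emeasure (distr lborel01 (uniform_count_measure {..<N}) (\<lambda>u. nat \<lfloor>u * real N\<rfloor>)) {k}
      = emeasure lborel {real k / real N..<real (Suc k) / real N}"
    using assms measurable_floor_index preimage_floor_index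
    by (simp add: emeasure_distr sets_uniform_count_measure space_restrict_space
        emeasure_restrict_space field_simps)
  also have "\<dots> = ennreal (real (Suc k) / real N - real k / real N)"
    by (intro emeasure_lborel_Ico divide_right_mono) auto
  also have "\<dots> = emeasure (uniform_count_measure {..<N}) {k}"
    using assms \<open>k \<in> {..<N}\<close>
    by (simp add: emeasure_uniform_count_measure diff_divide_distrib[symmetric] divide_ennreal
        ennreal_of_nat_eq_real_of_nat)
  finally show "emeasure (distr lborel01 (uniform_count_measure {..<N}) (\<lambda>u. nat \<lfloor>u * real N\<rfloor>)) {k}
      = emeasure (uniform_count_measure {..<N}) {k}" .
qed (simp_all add: sets_uniform_count_measure)

lemma distr_uniform_count_measure_bij:
  assumes "finite A" and "bij_betw p A A"
  shows "distr (uniform_count_measure A) (uniform_count_measure A) p = uniform_count_measure A"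
proof (rule measure_eqI_finite[OF _ _ assms(1)])
  have "p \<in> A \<rightarrow> A" using bij_betwE[OF assms(2)] by blast
  then have p: "p \<in> measurable (uniform_count_measure A) (uniform_count_measure A)"
    by (simp add: measurable_cong_sets[OF sets_uniform_count_measure_count_space
        sets_uniform_count_measure_count_space])
  fix a assume "a \<in> A"
  then have "a \<in> p ` A" using assms(2) by (simp add: bij_betw_def)
  then obtain b where b: "b \<in> A" "p b = a" by blast
  then have "p -` {a} \<inter> A = {b}" using assms(2) by (auto simp: bij_betw_def inj_on_def)
  then show "emeasure (distr (uniform_count_measure A) (uniform_count_measure A) p) {a}
      = emeasure (uniform_count_measure A) {a}"
    using assms(1) b \<open>a \<in> A\<close>
    by (simp add: emeasure_distr[OF p] sets_uniform_count_measure space_uniform_count_measure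
        emeasure_uniform_count_measure)
qed (simp_all add: sets_uniform_count_measure)

lemma distr_step_function_eq_emp_measure:
  assumes "0 < N" and "bij_betw p {..<N} {..<N}"
  shows "distr lborel01 borel (\<lambda>u. y (p (nat \<lfloor>u * real N\<rfloor>))) = emp_measure N y"
proof -
  let ?U = "uniform_count_measure {..<N}"
  have meas: "f \<in> measurable ?U M" if "f \<in> {..<N} \<rightarrow> space M" for f and M :: "'b measure"
    using that by (simp add: measurable_cong_sets[OF sets_uniform_count_measure_count_space refl])
  have p: "p \<in> measurable ?U ?U" and y: "y \<in> measurable ?U borel"
    using assms(2) by (auto intro!: meas simp: bij_betw_def space_uniform_count_measure)
  have "distr lborel01 borel (\<lambda>u. y (p (nat \<lfloor>u * real N\<rfloor>)))
      = distr (distr lborel01 ?U (\<lambda>u. nat \<lfloor>u * real N\<rfloor>)) borel (y \<circ> p)"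
    using measurable_comp[OF p y] measurable_floor_index[OF assms(1)]
    by (simp add: distr_distr comp_def)
  also have "\<dots> = distr (distr ?U ?U p) borel y"
    unfolding distr_lborel01_floor_index[OF assms(1)] by (simp add: distr_distr[OF y p])
  also have "\<dots> = emp_measure N y"
    unfolding distr_uniform_count_measure_bij[OF finite_lessThan assms(2)] emp_measure_def ..
  finally show ?thesis .
qed

text \<open>Markov's inequality for the order statistics of \<open>t\<close>.\<close>
lemma sorted_order_statistic_le:
  fixes t a :: "nat \<Rightarrow> real" and \<psi> :: "real \<Rightarrow> real"
  assumes L: "sorted (map t L)" "distinct L" "set L = {..<N}" and "k < N"
    and \<psi>: "mono \<psi>" and t_le: "\<And>i. t i \<le> \<psi> (a i)" and a_ge: "\<And>i. v0 \<le> a i"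
    and sum: "(\<Sum>i<N. a i) \<le> real N * M"
  shows "t (L ! k) \<le> \<psi> (v0 + real N * (M - v0) / real (N - k))"
proof (rule ccontr)
  define c where "c = real N * (M - v0) / real (N - k)"
  assume "\<not> t (L ! k) \<le> \<psi> (v0 + real N * (M - v0) / real (N - k))"
  then have above: "\<psi> (v0 + c) < t (L ! k)" by (simp add: c_def)
  have len: "length L = N" using distinct_card[OF L(2)] L(3) by simp
  have "c < a (L ! j) - v0" if "j \<in> {k..<N}" for j
  proof (rule ccontr)
    assume "\<not> c < a (L ! j) - v0"
    then have "\<psi> (a (L ! j)) \<le> \<psi> (v0 + c)" by (simp add: monoD[OF \<psi>])
    moreover have "t (L ! k) \<le> t (L ! j)"
      using sorted_nth_mono[OF L(1), of k j] that len by simp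
    ultimately show False using above t_le[of "L ! j"] by linarith
  qed
  then have "(\<Sum>j\<in>{k..<N}. c) < (\<Sum>j\<in>{k..<N}. a (L ! j) - v0)"
    using \<open>k < N\<close> by (intro sum_strict_mono) auto
  also have "\<dots> \<le> (\<Sum>j<N. a (L ! j) - v0)"
    using a_ge by (intro sum_mono2) auto
  also have "\<dots> = (\<Sum>i<N. a i - v0)"
    using L(2,3) len by (intro sum.reindex_bij_betw bij_betw_nth) auto
  also have "\<dots> \<le> real N * (M - v0)"
    using sum by (simp add: sum_subtractf algebra_simps)
  finally show False using \<open>k < N\<close> by (simp add: c_def)
qed

lemma tail_mean_le:
  assumes "u \<in> {0..<1}" and "real k \<le> u * real N" and "k < N" and "M - v0 \<le> M'" and "0 < M'"
  shows "real N * (M - v0) / real (N - k) \<le> M' / (1 - u)"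
proof -
  have le: "real N * (1 - u) \<le> real (N - k)" using assms(2,3) by (simp add: algebra_simps)
  have pos: "0 < real N * (1 - u)" using assms(1,3) by simp
  have "real N * (M - v0) / real (N - k) \<le> real N * M' / real (N - k)"
    using assms(4) le pos by (intro divide_right_mono mult_left_mono) auto
  also have "\<dots> \<le> real N * M' / (real N * (1 - u))"
    using assms(5) le pos by (intro divide_left_mono) auto
  also have "\<dots> = M' / (1 - u)" using assms(3) by simp
  finally show ?thesis .
qed

lemma emp_measure_in_quantile_measures:
  fixes x :: "nat \<Rightarrow> 'a::euclidean_space" and V :: "'a \<Rightarrow> real"
  assumes "0 < N"
    and \<sigma>: "\<And>y. \<sigma> y \<in> T \<and> 0 \<le> \<sigma> y \<and> \<gamma> (\<sigma> y) = y \<and> \<sigma> y \<le> \<psi> (V y)"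
    and \<psi>: "mono \<psi>" and V: "\<And>y. v0 \<le> V y" and M': "M - v0 \<le> M'" "0 < M'"
    and sum: "(\<Sum>i<N. V (x i)) \<le> real N * M"
  shows "emp_measure N x \<in> quantile_measure \<gamma> ` quantile_functions T (\<lambda>u. \<psi> (v0 + M' / (1 - u)))"
proof -
  define L where "L = sort_key (\<lambda>i. \<sigma> (x i)) [0..<N]"
  have L: "sorted (map (\<lambda>i. \<sigma> (x i)) L)" "distinct L" "set L = {..<N}" "length L = N"
    by (auto simp: L_def)
  define k where "k u = nat \<lfloor>u * real N\<rfloor>" for u :: real
  define q where "q = restrict (\<lambda>u. \<sigma> (x (L ! k u))) {0..<1}"
  have k: "k u < N" if "u \<in> {0..<1}" for u
    using floor_index_less[OF \<open>0 < N\<close> that] by (simp add: k_def)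
  have "q \<in> quantile_functions T (\<lambda>u. \<psi> (v0 + M' / (1 - u)))"
    unfolding quantile_functions_def
  proof (intro CollectI conjI mono_onI)
    fix u v :: real assume "u \<in> {0..<1}" "v \<in> {0..<1}" "u \<le> v"
    moreover from this have "k u \<le> k v"
      unfolding k_def by (intro nat_mono floor_mono mult_right_mono) auto
    ultimately show "q u \<le> q v"
      using sorted_nth_mono[OF L(1), of "k u" "k v"] k L(4) by (simp add: q_def)
  next
    have "q u \<le> \<psi> (v0 + M' / (1 - u))" if u: "u \<in> {0..<1}" for u
    proof -
      have "real N * (M - v0) / real (N - k u) \<le> M' / (1 - u)"
        using u k[OF u] M' by (intro tail_mean_le) (simp_all add: k_def)
      then have "\<psi> (v0 + real N * (M - v0) / real (N - k u)) \<le> \<psi> (v0 + M' / (1 - u))"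
        by (simp add: monoD[OF \<psi>])
      moreover have "\<sigma> (x (L ! k u)) \<le> \<psi> (v0 + real N * (M - v0) / real (N - k u))"
        using \<sigma> V sum by (intro sorted_order_statistic_le[OF L(1-3) k[OF u] \<psi>]) auto
      ultimately show ?thesis using u by (simp add: q_def)
    qed
    then show "q \<in> PiE {0..<1} (\<lambda>u. T \<inter> {0..\<psi> (v0 + M' / (1 - u))})"
      using \<sigma> by (simp add: q_def)
  qed
  moreover have "quantile_measure \<gamma> q = emp_measure N x"
  proof -
    have "quantile_measure \<gamma> q = distr lborel01 borel (\<lambda>u. x (L ! k u))"
      unfolding quantile_measure_def using \<sigma>
      by (intro distr_cong) (auto simp: q_def space_restrict_space)
    also have "\<dots> = emp_measure N x"
      unfolding k_def
      by (rule distr_step_function_eq_emp_measure[OF \<open>0 < N\<close> bij_betw_nth[OF L(2)]])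
        (simp_all add: L)
    finally show ?thesis .
  qed
  ultimately show ?thesis by (intro image_eqI[where x = q]) simp_all
qed

lemma coercive_eventually_ge:
  fixes V :: "'a::real_normed_vector \<Rightarrow> real"
  assumes "filterlim V at_top at_infinity"
  obtains R where "\<And>x. R \<le> norm x \<Longrightarrow> v \<le> V x"
  using assms unfolding filterlim_at_top eventually_at_infinity by blast

lemma coercive_bounded_below:
  fixes V :: "'a::euclidean_space \<Rightarrow> real"
  assumes "continuous_on UNIV V" and "filterlim V at_top at_infinity"
  obtains v0 where "\<And>y. v0 \<le> V y"
proof -
  obtain R where R: "\<And>x. R \<le> norm x \<Longrightarrow> V 0 \<le> V x"
    using coercive_eventually_ge[OF assms(2)] by blast
  have "\<exists>z\<in>cball 0 \<bar>R\<bar>. \<forall>y\<in>cball 0 \<bar>R\<bar>. V z \<le> V y"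
    by (intro continuous_attains_inf compact_cball continuous_on_subset[OF assms(1)]) auto
  then obtain z where z: "\<And>y. y \<in> cball 0 \<bar>R\<bar> \<Longrightarrow> V z \<le> V y" by blast
  have "min (V 0) (V z) \<le> V y" for y
  proof (cases "R \<le> norm y")
    case True
    then show ?thesis using R by force
  next
    case False
    then have "norm y \<le> \<bar>R\<bar>" by linarith
    then show ?thesis using z[of y] by simp
  qed
  then show thesis by (rule that)
qed

lemma coercive_sublevel_radius:
  fixes V :: "'a::real_normed_vector \<Rightarrow> real"
  assumes "filterlim V at_top at_infinity"
  obtains \<rho> where "mono \<rho>" and "\<And>y. norm y \<le> \<rho> (V y)"
proof
  define S where "S v = insert 0 (norm ` {x. V x \<le> v})" for v
  have bdd: "bdd_above (S v)" for v
  proof -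
    obtain R where R: "\<And>x. R \<le> norm x \<Longrightarrow> v + 1 \<le> V x"
      using coercive_eventually_ge[OF assms] by blast
    have "norm x \<le> R" if "V x \<le> v" for x
      using R[of x] that by (cases "R \<le> norm x") auto
    then show ?thesis unfolding S_def by (intro bdd_aboveI[of _ "max R 0"]) (force simp: le_max_iff_disj)
  qed
  show "mono (\<lambda>v. Sup (S v))"
    using bdd by (intro monoI cSup_subset_mono) (auto simp: S_def)
  show "norm y \<le> Sup (S (V y))" for y
    using bdd by (intro cSup_upper) (auto simp: S_def)
qed

lemma compact_superset_of_sublevel_emp_measures:
  fixes V :: "'a::euclidean_space \<Rightarrow> real"
  assumes "continuous_on UNIV V" and "filterlim V at_top at_infinity"
  shows "\<exists>K. K \<subseteq> prob_measures \<and> compactin weak_top K \<and>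
     (\<forall>N x. 0 < N \<longrightarrow> (\<Sum>i<N. V (x i)) \<le> real N * M \<longrightarrow> emp_measure N x \<in> K)"
proof -
  obtain T and \<gamma> :: "real \<Rightarrow> 'a" where T: "\<And>s. compact (T \<inter> {0..s})" and \<gamma>: "continuous_on T \<gamma>"
    and onto: "\<And>y. \<exists>t\<in>T. 0 \<le> t \<and> t \<le> norm y + 2 \<and> \<gamma> t = y"
    using euclidean_space_curve_parametrisation by blast
  obtain v0 where v0: "\<And>y. v0 \<le> V y" using coercive_bounded_below[OF assms] by blast
  obtain \<rho> where \<rho>: "mono \<rho>" "\<And>y. norm y \<le> \<rho> (V y)"
    using coercive_sublevel_radius[OF assms(2)] by blast
  define \<sigma> where "\<sigma> y = (SOME t. t \<in> T \<and> 0 \<le> t \<and> t \<le> norm y + 2 \<and> \<gamma> t = y)" for y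
  have \<sigma>: "\<sigma> y \<in> T \<and> 0 \<le> \<sigma> y \<and> \<gamma> (\<sigma> y) = y \<and> \<sigma> y \<le> \<rho> (V y) + 2" for y
    using someI_ex[OF onto[of y, unfolded Bex_def]] \<rho>(2)[of y] unfolding \<sigma>_def by auto
  define M' where "M' = \<bar>M - v0\<bar> + 1"
  define \<tau> where "\<tau> = (\<lambda>u. \<rho> (v0 + M' / (1 - u)) + 2)"
  have "mono_on {0..<1} \<tau>"
  proof (rule mono_onI)
    fix u v :: real assume "u \<in> {0..<1}" "v \<in> {0..<1}" "u \<le> v"
    then have "M' / (1 - u) \<le> M' / (1 - v)" by (intro divide_left_mono) (auto simp: M'_def)
    then show "\<tau> u \<le> \<tau> v" using monoD[OF \<rho>(1)] by (simp add: \<tau>_def)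
  qed
  moreover have "emp_measure N x \<in> quantile_measure \<gamma> ` quantile_functions T \<tau>"
    if "0 < N" "(\<Sum>i<N. V (x i)) \<le> real N * M" for N x
  proof -
    have "mono (\<lambda>v. \<rho> v + 2)" using \<rho>(1) by (simp add: mono_def)
    moreover have "M - v0 \<le> M'" "0 < M'" by (simp_all add: M'_def)
    ultimately show ?thesis
      unfolding \<tau>_def using \<sigma> v0 that
      by (intro emp_measure_in_quantile_measures[where \<psi> = "\<lambda>v. \<rho> v + 2", simplified]) auto
  qed
  ultimately show ?thesis
    using quantile_measure_in_prob_measures[OF \<gamma>]
    by (intro exI[of _ "quantile_measure \<gamma> ` quantile_functions T \<tau>"])
       (auto intro!: compactin_weak_top_quantile_measures[OF T \<gamma>])
qed

section \<open>Energy estimates\<close>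

lemma sum_pairs_less:
  fixes f :: "nat \<Rightarrow> 'a::comm_semiring_1"
  shows "(\<Sum>(i, j)\<in>{(i, j). i < j \<and> j < N}. f i + f j) = of_nat (N - 1) * (\<Sum>i<N. f i)"
proof (induction N)
  case (Suc N)
  have split: "{(i, j). i < j \<and> j < Suc N} = {(i, j). i < j \<and> j < N} \<union> (\<lambda>i. (i, N)) ` {..<N}"
    by auto
  have fin: "finite {(i, j). i < j \<and> j < N}"
    by (rule finite_subset[of _ "{..<N} \<times> {..<N}"]) auto
  have "(\<Sum>(i, j)\<in>{(i, j). i < j \<and> j < Suc N}. f i + f j)
      = (\<Sum>(i, j)\<in>{(i, j). i < j \<and> j < N}. f i + f j) + (\<Sum>i<N. f i + f N)"
    unfolding split by (subst sum.union_disjoint) (auto simp: fin sum.reindex inj_on_def)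
  also have "\<dots> = of_nat (Suc N - 1) * (\<Sum>i<Suc N. f i)"
    unfolding Suc.IH by (cases N) (simp_all add: sum.distrib algebra_simps)
  finally show ?case .
qed simp

lemma card_pairs_less: "2 * card {(i, j). i < j \<and> j < N} = N * (N - 1)"
  using sum_pairs_less[of "\<lambda>_. 1 :: nat" N] by (simp add: mult.commute)

lemma H_N_lower_bound:
  fixes V :: "'a \<Rightarrow> real" and W :: "'a \<Rightarrow> 'a \<Rightarrow> ereal"
  assumes W: "\<And>x y. ereal (c - e * (V x + V y)) \<le> W x y" and "0 \<le> e" and "0 < N"
    and S: "0 \<le> (\<Sum>i<N. V (x i))"
  shows "ereal ((1 - e) * (\<Sum>i<N. V (x i)) / real N - \<bar>c\<bar> / 2) \<le> H_N V W N x"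
proof -
  define S where "S = (\<Sum>i<N. V (x i))"
  define P where "P = {(i, j). i < j \<and> j < N}"
  have "(\<Sum>(i, j)\<in>P. c - e * (V (x i) + V (x j))) = c * real (card P) - e * (real (N - 1) * S)"
    using sum_pairs_less[of "\<lambda>i. V (x i)" N]
    by (simp add: P_def S_def sum_subtractf sum_distrib_left[symmetric] case_prod_unfold)
  moreover have "ereal (\<Sum>(i, j)\<in>P. c - e * (V (x i) + V (x j))) \<le> (\<Sum>(i, j)\<in>P. W (x i) (x j))"
    unfolding case_prod_unfold sum_ereal[symmetric] by (intro sum_mono W)
  ultimately have pairs: "ereal (c * real (card P) - e * (real (N - 1) * S)) \<le> (\<Sum>(i, j)\<in>P. W (x i) (x j))"
    by simp
  have N2: "0 < real N ^ 2" using \<open>0 < N\<close> by simp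
  have "2 * card P \<le> N * N" using card_pairs_less[of N] by (simp add: P_def)
  then have "2 * real (card P) \<le> real N ^ 2" by (simp add: power2_eq_square flip: of_nat_mult)
  then have "- \<bar>c\<bar> * real N ^ 2 \<le> 2 * (c * real (card P))"
    using mult_left_mono[of "2 * real (card P)" "real N ^ 2" "\<bar>c\<bar>"]
      mult_right_mono[OF abs_ge_minus_self[of c], of "2 * real (card P)"] by simp
  then have "- \<bar>c\<bar> / 2 \<le> c * real (card P) / real N ^ 2"
    using N2 by (simp add: pos_le_divide_eq)
  moreover have "e * (real (N - 1) * S) / real N ^ 2 \<le> e * S / real N"
  proof -
    have "e * (real (N - 1) * S) / real N ^ 2 = e * S / real N * (real (N - 1) / real N)"
      by (simp add: power2_eq_square)
    also have "\<dots> \<le> e * S / real N * 1"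
      using S \<open>0 \<le> e\<close> by (intro mult_left_mono) (auto simp: S_def divide_le_eq_1)
    finally show ?thesis by simp
  qed
  ultimately have "(1 - e) * S / real N - \<bar>c\<bar> / 2
      \<le> S / real N + (c * real (card P) - e * (real (N - 1) * S)) / real N ^ 2"
    by (simp add: diff_divide_distrib left_diff_distrib)
  then have "ereal ((1 - e) * S / real N - \<bar>c\<bar> / 2)
      \<le> ereal (S / real N) + ereal (1 / real N ^ 2) * ereal (c * real (card P) - e * (real (N - 1) * S))"
    by simp
  also have "\<dots> \<le> ereal (S / real N) + ereal (1 / real N ^ 2) * (\<Sum>(i, j)\<in>P. W (x i) (x j))"
    by (intro add_left_mono ereal_mult_left_mono pairs) simp
  also have "\<dots> = H_N V W N x" by (simp add: H_N_def S_def P_def)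
  finally show ?thesis by (simp add: S_def)
qed

lemma gibbs_weight_le:
  assumes "0 \<le> b" and "ereal r \<le> h"
  shows "gibbs_weight b h \<le> ennreal (exp (- b * r))"
proof (cases h)
  case (real s)
  then show ?thesis using assms by (simp add: gibbs_weight_def ennreal_leI mult_left_mono)
qed (use assms in \<open>simp_all add: gibbs_weight_def\<close>)

lemma ln_ennreal_le:
  assumes "Z \<le> ennreal y" and "0 < y"
  shows "ln_ennreal Z \<le> ereal (ln y)"
proof (cases "Z = 0")
  case False
  moreover have "Z \<noteq> \<top>" using assms(1) by (auto simp: top_unique)
  moreover have "enn2real Z \<le> y" using enn2real_mono[OF assms(1)] assms(2) by simp
  moreover have "0 < enn2real Z" using calculation(1,2)
    by (simp add: enn2real_positive_iff less_top[symmetric] zero_less_iff_neq_zero)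
  ultimately show ?thesis by (simp add: ln_ennreal_def)
qed (simp add: ln_ennreal_def)

lemma nn_integral_config_space_prod:
  fixes f :: "'a::euclidean_space \<Rightarrow> real"
  assumes "integrable lborel f" and "\<And>y. 0 \<le> f y"
  shows "(\<integral>\<^sup>+x. (\<Prod>i<N. ennreal (f (x i))) \<partial>config_space N) = ennreal ((\<integral>y. f y \<partial>lborel) ^ N)"
proof -
  interpret product_sigma_finite "\<lambda>_. lborel :: 'a measure" by standard
  have "(\<integral>\<^sup>+x. (\<Prod>i<N. ennreal (f (x i))) \<partial>config_space N) = (\<Prod>i<N. \<integral>\<^sup>+y. ennreal (f y) \<partial>lborel)"
    unfolding config_space_def using assms(1)
    by (intro product_nn_integral_prod[where f = "\<lambda>_ y. ennreal (f y)"]) auto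
  also have "\<dots> = ennreal ((\<integral>y. f y \<partial>lborel) ^ N)"
    using assms by (simp add: nn_integral_eq_integral ennreal_power integral_nonneg_AE)
  finally show ?thesis .
qed

text \<open>With \<open>S = \<Sum>\<^sub>i V (x i) > N M\<close> and \<open>t \<ge> 1\<close>, the exponent \<open>-t S\<close> is at most \<open>-(t - 1) N M - S\<close>, and \<open>exp (-S)\<close>
  is the product density of \<open>e\<^sup>-\<^sup>V\<close>.\<close>
lemma gibbs_weight_le_product_density:
  fixes V :: "'a \<Rightarrow> real" and W :: "'a \<Rightarrow> 'a \<Rightarrow> ereal" and b e :: real and N :: nat
  defines "t \<equiv> b / real N * (1 - e)"
  assumes W: "\<And>x y. ereal (c - e * (V x + V y)) \<le> W x y" and "0 \<le> e"
    and "0 < N" and "0 < b" and "1 \<le> t" and "0 \<le> M" and S: "real N * M < (\<Sum>i<N. V (x i))"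
  shows "gibbs_weight b (H_N V W N x)
           \<le> ennreal (exp (b * \<bar>c\<bar> / 2 - (t - 1) * real N * M)) * (\<Prod>i<N. ennreal (exp (- V (x i))))"
proof -
  define S where "S = (\<Sum>i<N. V (x i))"
  have "0 \<le> real N * M" using \<open>0 \<le> M\<close> by simp
  then have "ereal ((1 - e) * S / real N - \<bar>c\<bar> / 2) \<le> H_N V W N x"
    unfolding S_def using W \<open>0 \<le> e\<close> \<open>0 < N\<close> S by (intro H_N_lower_bound) auto
  then have "gibbs_weight b (H_N V W N x) \<le> ennreal (exp (- b * ((1 - e) * S / real N - \<bar>c\<bar> / 2)))"
    using \<open>0 < b\<close> by (intro gibbs_weight_le) auto
  also have "- b * ((1 - e) * S / real N - \<bar>c\<bar> / 2) = b * \<bar>c\<bar> / 2 - t * S"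
    using \<open>0 < N\<close> by (simp add: t_def field_simps)
  also have "\<dots> \<le> b * \<bar>c\<bar> / 2 - (t - 1) * real N * M - S"
    using \<open>1 \<le> t\<close> S mult_left_mono[of "real N * M" S "t - 1"] by (simp add: S_def algebra_simps)
  finally have "gibbs_weight b (H_N V W N x) \<le> ennreal (exp (b * \<bar>c\<bar> / 2 - (t - 1) * real N * M - S))"
    by simp
  also have "exp (b * \<bar>c\<bar> / 2 - (t - 1) * real N * M - S)
      = exp (b * \<bar>c\<bar> / 2 - (t - 1) * real N * M) * (\<Prod>i<N. exp (- V (x i)))"
    by (simp add: S_def exp_sum[symmetric] sum_negf flip: exp_add)
  finally show ?thesis by (simp add: ennreal_mult prod_nonneg prod_ennreal)
qed

lemma ZQ_complement_le:
  fixes V :: "'a::euclidean_space \<Rightarrow> real" and W :: "'a \<Rightarrow> 'a \<Rightarrow> ereal"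
    and beta :: "nat \<Rightarrow> real" and e :: real and N :: nat
  defines "t \<equiv> beta N / real N * (1 - e)"
  assumes W: "\<And>x y. ereal (c - e * (V x + V y)) \<le> W x y" and "0 \<le> e"
    and "0 < N" and "0 < beta N" and "1 \<le> t" and "0 \<le> M"
    and K: "\<And>x. (\<Sum>i<N. V (x i)) \<le> real N * M \<Longrightarrow> emp_measure N x \<in> K"
    and V: "continuous_on UNIV V" "integrable lborel (\<lambda>x. exp (- V x))"
  shows "ZQ V W beta N (prob_measures - K)
           \<le> ennreal (exp (beta N * \<bar>c\<bar> / 2 - (t - 1) * real N * M) * (\<integral>x. exp (- V x) \<partial>lborel) ^ N)"
proof -
  define E where "E = exp (beta N * \<bar>c\<bar> / 2 - (t - 1) * real N * M)"
  have "indicator {x. emp_measure N x \<in> prob_measures - K} x * gibbs_weight (beta N) (H_N V W N x)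
      \<le> ennreal E * (\<Prod>i<N. ennreal (exp (- V (x i))))" for x
  proof (cases "emp_measure N x \<in> K")
    case False
    then have "real N * M < (\<Sum>i<N. V (x i))" using K by force
    then have "gibbs_weight (beta N) (H_N V W N x) \<le> ennreal E * (\<Prod>i<N. ennreal (exp (- V (x i))))"
      unfolding E_def t_def using \<open>0 \<le> e\<close> \<open>0 < N\<close> \<open>0 < beta N\<close> \<open>1 \<le> t\<close> \<open>0 \<le> M\<close>
      by (intro gibbs_weight_le_product_density[where b = "beta N", OF W]) (simp_all add: t_def)
    then show ?thesis by (simp add: indicator_def)
  qed simp
  then have "ZQ V W beta N (prob_measures - K)
      \<le> (\<integral>\<^sup>+x. ennreal E * (\<Prod>i<N. ennreal (exp (- V (x i)))) \<partial>config_space N)"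
    unfolding ZQ_def by (intro nn_integral_mono)
  also have "\<dots> = ennreal E * (\<integral>\<^sup>+x. (\<Prod>i<N. ennreal (exp (- V (x i)))) \<partial>config_space N)"
  proof (rule nn_integral_cmult)
    note borel_measurable_continuous_onI[OF V(1), measurable]
    show "(\<lambda>x. \<Prod>i<N. ennreal (exp (- V (x i)))) \<in> borel_measurable (config_space N)"
      unfolding config_space_def by measurable
  qed
  also have "\<dots> = ennreal E * ennreal ((\<integral>x. exp (- V x) \<partial>lborel) ^ N)"
    by (simp add: nn_integral_config_space_prod[OF V(2)])
  finally show ?thesis by (simp add: E_def ennreal_mult integral_nonneg_AE)
qed

lemma ln_ZQ_complement_eventually_le:
  fixes V :: "'a::euclidean_space \<Rightarrow> real" and W :: "'a \<Rightarrow> 'a \<Rightarrow> ereal" and beta :: "nat \<Rightarrow> real"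
  assumes W: "\<And>x y. ereal (c - e * (V x + V y)) \<le> W x y" and e: "0 < e" "e < 1"
    and V: "continuous_on UNIV V" "integrable lborel (\<lambda>x. exp (- V x))"
    and beta_pos: "\<And>N. 0 < beta N" and beta_growth: "filterlim (\<lambda>N. beta N / real N) at_top sequentially"
    and "0 \<le> L"
    and K: "\<And>N x. 0 < N \<Longrightarrow> (\<Sum>i<N. V (x i)) \<le> real N * ((\<bar>c\<bar> / 2 + L + 1) / (1 - e)) \<Longrightarrow>
              emp_measure N x \<in> K"
  shows "\<forall>\<^sub>F N in sequentially.
           ln_ennreal (ZQ V W beta N (prob_measures - K)) / ereal (beta N) \<le> ereal (- L)"
proof -
  define a where "a = 1 - e"
  define M where "M = (\<bar>c\<bar> / 2 + L + 1) / a"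
  define C where "C = (\<integral>x. exp (- V x) \<partial>lborel) + 1"
  have "0 < a" "0 \<le> M" "a * M = \<bar>c\<bar> / 2 + L + 1" using e \<open>0 \<le> L\<close> by (simp_all add: a_def M_def)
  have I: "0 \<le> (\<integral>x. exp (- V x) \<partial>lborel)" by (simp add: integral_nonneg_AE)
  then have "1 \<le> C" by (simp add: C_def)
  have "\<forall>\<^sub>F N in sequentially. max (1 / a) (M + ln C + 1) \<le> beta N / real N"
    using beta_growth unfolding filterlim_at_top by blast
  moreover have "\<forall>\<^sub>F N in sequentially. 0 < N" by (rule eventually_gt_at_top)
  ultimately show ?thesis
  proof eventually_elim
    case (elim N)
    define t where "t = beta N / real N"
    have t: "1 \<le> t * a" "M + ln C + 1 \<le> t" "0 < t"
      using elim \<open>0 < a\<close> beta_pos[of N] by (auto simp: t_def field_simps)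
    have beta: "beta N = t * real N" using elim by (simp add: t_def)
    define E where "E = exp (beta N * \<bar>c\<bar> / 2 - (t * a - 1) * real N * M)"
    have "\<And>x. (\<Sum>i<N. V (x i)) \<le> real N * M \<Longrightarrow> emp_measure N x \<in> K"
      using K elim by (simp add: M_def a_def)
    moreover have "1 \<le> beta N / real N * (1 - e)" using t by (simp add: t_def a_def)
    ultimately have "ZQ V W beta N (prob_measures - K) \<le> ennreal (E * (\<integral>x. exp (- V x) \<partial>lborel) ^ N)"
      using ZQ_complement_le[where beta = beta and N = N and M = M and K = K, OF W _ _ beta_pos]
        e elim \<open>0 \<le> M\<close> V by (simp add: E_def t_def a_def)
    also have "\<dots> \<le> ennreal (E * C ^ N)"
      using I by (intro ennreal_leI mult_left_mono power_mono) (auto simp: C_def E_def)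
    finally have "ln_ennreal (ZQ V W beta N (prob_measures - K)) \<le> ereal (ln (E * C ^ N))"
      using \<open>1 \<le> C\<close> by (intro ln_ennreal_le) (auto simp: E_def)
    then have "ln_ennreal (ZQ V W beta N (prob_measures - K)) / ereal (beta N)
        \<le> ereal (ln (E * C ^ N) / beta N)"
      using ereal_divide_right_mono[of _ _ "ereal (beta N)"] beta_pos[of N] by fastforce
    also have "ln (E * C ^ N) / beta N = \<bar>c\<bar> / 2 - a * M + (M + ln C) / t"
      using \<open>1 \<le> C\<close> elim t by (simp add: E_def beta ln_mult ln_realpow field_simps)
    also have "\<dots> \<le> - L"
      using t \<open>a * M = \<bar>c\<bar> / 2 + L + 1\<close> \<open>0 \<le> M\<close> \<open>1 \<le> C\<close> by (simp add: field_simps)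
    finally show ?case by simp
  qed
qed

theorem lemma2p3:
  fixes V :: "'a::euclidean_space \<Rightarrow> real"
    and W :: "'a \<Rightarrow> 'a \<Rightarrow> ereal"
    and beta :: "nat \<Rightarrow> real"
  assumes W_sym: "\<And>x y. W x y = W y x"
    and W_not_minf: "\<And>x y. W x y \<noteq> -\<infinity>"
    and W_fin_off_diag: "\<And>x y. x \<noteq> y \<Longrightarrow> W x y \<noteq> \<infinity>"
    and W_meas: "(\<lambda>(x, y). W x y) \<in> borel_measurable (borel \<Otimes>\<^sub>M borel)"
    and V_cont: "continuous_on UNIV V"
    and V_coercive: "filterlim V at_top at_infinity"
    and V_int: "integrable lborel (\<lambda>x. exp (- V x))"
    and H3: "\<exists>c \<epsilon>o. 0 < \<epsilon>o \<and> \<epsilon>o < 1 \<and>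
               (\<forall>x y. W x y \<ge> ereal (c - \<epsilon>o * (V x + V y)))"
    and beta_pos: "\<And>N. beta N > 0"
    and beta_growth: "filterlim (\<lambda>N. beta N / real N) at_top sequentially"
  shows "\<forall>L\<ge>0. \<exists>K. K \<subseteq> prob_measures \<and> compactin weak_top K \<and>
           Limsup sequentially
             (\<lambda>N. ln_ennreal (ZQ V W beta N (prob_measures - K)) / ereal (beta N))
           \<le> ereal (- L)"
  \<comment> \<open>Of the hypotheses on \<open>W\<close> only (H3) is needed: the Gibbs weight vanishes where \<open>H\<^sub>N = \<infinity>\<close>,
      and monotonicity of the nonnegative integral \<open>ZQ\<close> requires no measurability.\<close>
proof (intro allI impI)
  fix L :: real assume "0 \<le> L"
  obtain c e where e: "0 < e" "e < 1" and W: "\<And>x y. ereal (c - e * (V x + V y)) \<le> W x y"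
    using H3 by blast
  obtain K where K: "K \<subseteq> prob_measures" "compactin weak_top K"
    and emp: "\<And>N x. 0 < N \<Longrightarrow> (\<Sum>i<N. V (x i)) \<le> real N * ((\<bar>c\<bar> / 2 + L + 1) / (1 - e)) \<Longrightarrow>
                emp_measure N x \<in> K"
    using compact_superset_of_sublevel_emp_measures[OF V_cont V_coercive] by blast
  have "\<forall>\<^sub>F N in sequentially.
      ln_ennreal (ZQ V W beta N (prob_measures - K)) / ereal (beta N) \<le> ereal (- L)"
    using W e V_cont V_int beta_pos beta_growth \<open>0 \<le> L\<close> emp
    by (rule ln_ZQ_complement_eventually_le)
  then show "\<exists>K. K \<subseteq> prob_measures \<and> compactin weak_top K \<and>
      Limsup sequentially (\<lambda>N. ln_ennreal (ZQ V W beta N (prob_measures - K)) / ereal (beta N))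
        \<le> ereal (- L)"
    using K by (intro exI[of _ K]) (simp add: Limsup_bounded)
qed

end
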